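(* Let $K$ be a field and $q\in K$ a primitive $e$-th root of unity, where $e\ge 2$ is even. Let $D$ be the one-dimensional $\mathcal{H}_q(D_e)$-module on which $T_i^D$ acts as $-1$ for $0\le i\le e-1$, and $P$ its projective cover. Let $D^\lambda$ be the one-dimensional $\mathcal{H}_{q,1}(B_e)$-module on which $T_i^B$ acts as $-1$ for $0\le i\le e-1$, and $P^\lambda$ its projective cover. Then $P\cong \mathrm{Res}(P^\lambda)$ as $\mathcal{H}_q(D_e)$-modules.
   Context: $\mathcal{H}_{q,1}(B_n)$ is the $K$-algebra with generators $T_0^B,\dots,T_{n-1}^B$ and relations $(T_0^B+1)(T_0^B-1)=0$, $(T_i^B+1)(T_i^B-q)=0$ ($1\le i\le n-1$), $T_0^BT_1^BT_0^BT_1^B=T_1^BT_0^BT_1^BT_0^B$, $T_{i+1}^BT_i^BT_{i+1}^B=T_i^BT_{i+1}^BT_i^B$ ($1\le i\le n-2$), $T_i^BT_j^B=T_j^BT_i^B$ ($0\le i<j-1\le n-2$). $\mathcal{H}_q(D_n)$ is the $K$-algebra with generators $T_0^D,\dots,T_{n-1}^D$ and relations $(T_i^D+1)(T_i^D-q)=0$ ($0\le i\le n-1$), $T_0^DT_2^DT_0^D=T_2^DT_0^DT_2^D$, $T_0^DT_i^D=T_i^DT_0^D$ ($i\neq 2$), $T_{i+1}^DT_i^DT_{i+1}^D=T_i^DT_{i+1}^DT_i^D$ ($1\le i\le n-2$), $T_i^DT_j^D=T_j^DT_i^D$ ($1\le i<j-1\le n-2$). $\mathrm{Res}$ denotes restriction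 along the injective algebra homomorphism $\phi:\mathcal{H}_q(D_n)\to\mathcal{H}_{q,1}(B_n)$, $T_0^D\mapsto T_0^BT_1^BT_0^B$, $T_i^D\mapsto T_i^B$ ($1\le i\le n-1$). *)

theory Defs
  imports "Jordan_Normal_Form.Matrix"
begin

text \<open>Finite-dimensional modules over a K-algebra given by generators T_0,...,T_(n-1) and
relations are encoded as matrix representations: a pair (d, T) where T i is a d x d matrix
over K giving the action of the i-th generator on K^d (column vectors).\<close>

type_synonym 'a rep = "nat \<times> (nat \<Rightarrow> 'a mat)"

definition primitive_root_of_unity :: "'a::field \<Rightarrow> nat \<Rightarrow> bool" where
  "primitive_root_of_unity q e \<longleftrightarrow> q ^ e = 1 \<and> (\<forall>k. 0 < k \<and> k < e \<longrightarrow> q ^ k \<noteq> 1)"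

definition hecke_B_rep :: "'a::field \<Rightarrow> nat \<Rightarrow> 'a rep \<Rightarrow> bool" where
  "hecke_B_rep q n M \<longleftrightarrow> (let d = fst M; T = snd M in
     (\<forall>i<n. T i \<in> carrier_mat d d) \<and>
     (T 0 + 1\<^sub>m d) * (T 0 - 1\<^sub>m d) = 0\<^sub>m d d \<and>
     (\<forall>i. 1 \<le> i \<and> i \<le> n - 1 \<longrightarrow> (T i + 1\<^sub>m d) * (T i - q \<cdot>\<^sub>m 1\<^sub>m d) = 0\<^sub>m d d) \<and>
     (2 \<le> n \<longrightarrow> T 0 * T 1 * T 0 * T 1 = T 1 * T 0 * T 1 * T 0) \<and>
     (\<forall>i. 1 \<le> i \<and> i + 2 \<le> n \<longrightarrow> T (i+1) * T i * T (i+1) = T i * T (i+1) * T i) \<and>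
     (\<forall>i j. i + 1 < j \<and> j \<le> n - 1 \<longrightarrow> T i * T j = T j * T i))"

definition hecke_D_rep :: "'a::field \<Rightarrow> nat \<Rightarrow> 'a rep \<Rightarrow> bool" where
  "hecke_D_rep q n M \<longleftrightarrow> (let d = fst M; T = snd M in
     (\<forall>i<n. T i \<in> carrier_mat d d) \<and>
     (\<forall>i<n. (T i + 1\<^sub>m d) * (T i - q \<cdot>\<^sub>m 1\<^sub>m d) = 0\<^sub>m d d) \<and>
     (3 \<le> n \<longrightarrow> T 0 * T 2 * T 0 = T 2 * T 0 * T 2) \<and>
     (\<forall>i. 1 \<le> i \<and> i \<le> n - 1 \<and> i \<noteq> 2 \<longrightarrow> T 0 * T i = T i * T 0) \<and>
     (\<forall>i. 1 \<le> i \<and> i + 2 \<le> n \<longrightarrow> T (i+1) * T i * T (i+1) = T i * T (i+1) * T i) \<and>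
     (\<forall>i j. 1 \<le> i \<and> i + 1 < j \<and> j \<le> n - 1 \<longrightarrow> T i * T j = T j * T i))"

definition rep_hom :: "nat \<Rightarrow> 'a::field rep \<Rightarrow> 'a rep \<Rightarrow> 'a mat \<Rightarrow> bool" where
  "rep_hom n M N f \<longleftrightarrow> f \<in> carrier_mat (fst N) (fst M) \<and>
     (\<forall>i<n. f * snd M i = snd N i * f)"

definition surj_mat :: "'a::field mat \<Rightarrow> bool" where
  "surj_mat f \<longleftrightarrow> (\<forall>w \<in> carrier_vec (dim_row f). \<exists>v \<in> carrier_vec (dim_col f). f *\<^sub>v v = w)"

definition rep_iso :: "nat \<Rightarrow> 'a::field rep \<Rightarrow> 'a rep \<Rightarrow> bool" where
  "rep_iso n M N \<longleftrightarrow> (\<exists>f g. rep_hom n M N f \<and> rep_hom n N M g \<and>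
      g * f = 1\<^sub>m (fst M) \<and> f * g = 1\<^sub>m (fst N))"

definition submodule :: "nat \<Rightarrow> 'a::field rep \<Rightarrow> 'a vec set \<Rightarrow> bool" where
  "submodule n M U \<longleftrightarrow> U \<subseteq> carrier_vec (fst M) \<and> 0\<^sub>v (fst M) \<in> U \<and>
     (\<forall>u\<in>U. \<forall>v\<in>U. u + v \<in> U) \<and> (\<forall>c. \<forall>u\<in>U. c \<cdot>\<^sub>v u \<in> U) \<and>
     (\<forall>i<n. \<forall>u\<in>U. snd M i *\<^sub>v u \<in> U)"

text \<open>Testing the lifting property against finite-dimensional modules suffices for a
finite-dimensional module over a finite-dimensional algebra.\<close>
definition projective_rep :: "('a::field rep \<Rightarrow> bool) \<Rightarrow> nat \<Rightarrow> 'a rep \<Rightarrow> bool" where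
  "projective_rep isrep n P \<longleftrightarrow> isrep P \<and>
     (\<forall>M N f g. isrep M \<and> isrep N \<and> rep_hom n M N f \<and> surj_mat f \<and> rep_hom n P N g
        \<longrightarrow> (\<exists>h. rep_hom n P M h \<and> f * h = g))"

definition projective_cover :: "('a::field rep \<Rightarrow> bool) \<Rightarrow> nat \<Rightarrow> 'a rep \<Rightarrow> 'a rep \<Rightarrow> bool" where
  "projective_cover isrep n P S \<longleftrightarrow> projective_rep isrep n P \<and> isrep S \<and>
     (\<exists>\<pi>. rep_hom n P S \<pi> \<and> surj_mat \<pi> \<and>
        (\<forall>U. submodule n P U \<and>
             {u + k | u k. u \<in> U \<and> k \<in> carrier_vec (fst P) \<and> \<pi> *\<^sub>v k = 0\<^sub>v (fst S)}
               = carrier_vec (fst P)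
             \<longrightarrow> U = carrier_vec (fst P)))"

definition sign_rep :: "'a::field rep" where
  "sign_rep = (1, \<lambda>i. mat 1 1 (\<lambda>_. -1))"

definition Res :: "'a::field rep \<Rightarrow> 'a rep" where
  "Res M = (fst M, \<lambda>i. if i = 0 then snd M 0 * snd M 1 * snd M 0 else snd M i)"

end

theory Submission
  imports Defs "Jordan_Normal_Form.Determinant"
begin

(*
  Conjugation by the involution T_0 preserves the image of H_q(D_n) in H_{q,1}(B_n): it fixes
  T_2, ..., T_(n-1) and swaps T_1 with T_0 T_1 T_0.  Hence H_{q,1}(B_n) = H_q(D_n) + T_0 H_q(D_n),
  and restriction has an exact right adjoint Ind sending a D-module N to N (+) N, with T_0
  swapping the two summands.  Therefore Res maps projective modules to projective modules.

  The surjection from P^lambda onto the sign module is also a surjection of D-modules, and its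
  kernel stays superfluous.  Let p be the corresponding functional and U a D-submodule with
  p(u0) /= 0 for some u0 in U.  Superfluity in type B says that every B-submodule on which p
  does not vanish is everything.  If p does not vanish on the B-submodule {w in U. T_0 w in U},
  we are done.  Otherwise the B-submodule {u + T_0 u' | u, u' in U, p(u) + p(u') = 0} contains
  u0 - T_0 u0, with p-value 2 p(u0) /= 0, so it is everything; writing u0 as one of its
  elements then forces p(u0) = 0.  Here char K /= 2 is needed, which holds because q has even
  order.  So Res P^lambda is a projective cover of D, and projective covers are unique up to
  isomorphism.
*)

lemma mat_plus_one_mult_minus_one:
  fixes A :: "'a::comm_ring_1 mat"
  assumes A: "A \<in> carrier_mat n n"
  shows "(A + 1\<^sub>m n) * (A - 1\<^sub>m n) = A * A - 1\<^sub>m n"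
proof -
  have "(A + 1\<^sub>m n) * (A - 1\<^sub>m n) = A * A + A - (A + 1\<^sub>m n)"
    using A by (simp add: add_mult_distrib_mat[of _ n n] mult_minus_distrib_mat[of _ n n])
  also have "\<dots> = A * A - 1\<^sub>m n"
    using A by (intro eq_matI) auto
  finally show ?thesis .
qed

lemma mat_involution_if_quadratic:
  fixes A :: "'a::comm_ring_1 mat"
  assumes A: "A \<in> carrier_mat n n" and quadratic: "(A + 1\<^sub>m n) * (A - 1\<^sub>m n) = 0\<^sub>m n n"
  shows "A * A = 1\<^sub>m n"
proof (rule eq_matI)
  fix i j assume ij: "i < dim_row (1\<^sub>m n :: 'a mat)" "j < dim_col (1\<^sub>m n :: 'a mat)"
  have "(A * A - 1\<^sub>m n) $$ (i, j) = 0"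
    using quadratic ij by (simp add: mat_plus_one_mult_minus_one[OF A, symmetric])
  then show "(A * A) $$ (i, j) = 1\<^sub>m n $$ (i, j)"
    using A ij by simp
qed (use A in auto)

lemma quadratic_conj_involution:
  fixes A Y :: "'a::comm_ring_1 mat"
  assumes A: "A \<in> carrier_mat n n" and Y: "Y \<in> carrier_mat n n" and AA: "A * A = 1\<^sub>m n"
  shows "(A * Y * A + 1\<^sub>m n) * (A * Y * A - q \<cdot>\<^sub>m 1\<^sub>m n)
    = A * ((Y + 1\<^sub>m n) * (Y - q \<cdot>\<^sub>m 1\<^sub>m n)) * A"
proof -
  have conj_mult: "A * X * A * (A * Z * A) = A * (X * Z) * A"
    if "X \<in> carrier_mat n n" "Z \<in> carrier_mat n n" for X Z
  proof -
    have "A * X * A * (A * Z * A) = A * X * (A * A) * Z * A"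
      using A that by (simp add: assoc_mult_mat[of _ n n _ n _ n])
    then show ?thesis
      using A that AA by (simp add: assoc_mult_mat[of _ n n _ n _ n])
  qed
  have conj_scalar: "A * (c \<cdot>\<^sub>m 1\<^sub>m n) * A = c \<cdot>\<^sub>m 1\<^sub>m n" for c
    using A AA by (simp add: mult_smult_distrib[of _ n n _ n] mult_smult_assoc_mat[of _ n n _ n])
  have plus: "A * Y * A + 1\<^sub>m n = A * (Y + 1\<^sub>m n) * A"
    using A Y AA by (simp add: mult_add_distrib_mat[of _ n n] add_mult_distrib_mat[of _ n n])
  have minus: "A * Y * A - q \<cdot>\<^sub>m 1\<^sub>m n = A * (Y - q \<cdot>\<^sub>m 1\<^sub>m n) * A"
    using A Y by (simp add: mult_minus_distrib_mat[of _ n n] minus_mult_distrib_mat[of _ n n]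
        conj_scalar)
  show ?thesis
    unfolding plus minus using Y by (intro conj_mult) auto
qed

lemma mult_mat_left_commute:
  assumes A: "A \<in> carrier_mat n n" and B: "B \<in> carrier_mat n n" and X: "X \<in> carrier_mat n n"
    and commute: "A * B = B * A"
  shows "A * (B * X) = B * (A * X)"
proof -
  have "A * (B * X) = A * B * X"
    using A B X by simp
  also have "\<dots> = B * (A * X)"
    unfolding commute using A B X by simp
  finally show ?thesis .
qed

lemma mult_mat_involution_cancel:
  fixes A :: "'a::semiring_1 mat"
  assumes A: "A \<in> carrier_mat n n" and X: "X \<in> carrier_mat n n" and inv: "A * A = 1\<^sub>m n"
  shows "A * (A * X) = X"
proof -
  have "A * (A * X) = A * A * X"
    using A X by simp
  then show ?thesis
    unfolding inv using X by simp
qed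

lemma mult_mat_assoc_cong:
  assumes "A \<in> carrier_mat n n" "B \<in> carrier_mat n n" "C \<in> carrier_mat n n"
    "A' \<in> carrier_mat n n" "B' \<in> carrier_mat n n" "C' \<in> carrier_mat n n"
    "X \<in> carrier_mat n n" and eq: "A * B * C = A' * B' * C'"
  shows "A * (B * (C * X)) = A' * (B' * (C' * X))"
proof -
  have "A * (B * (C * X)) = A * B * C * X"
    using assms(1-3,7) by (simp add: assoc_mult_mat[of _ n n _ n _ n])
  also have "\<dots> = A' * B' * C' * X"
    by (simp only: eq)
  also have "\<dots> = A' * (B' * (C' * X))"
    using assms(4-7) by (simp add: assoc_mult_mat[of _ n n _ n _ n])
  finally show ?thesis .
qed

lemma mult_mat_commute_product:
  assumes A: "A \<in> carrier_mat n n" and B: "B \<in> carrier_mat n n" and X: "X \<in> carrier_mat n n"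
    and AX: "A * X = X * A" and BX: "B * X = X * B"
  shows "A * B * X = X * (A * B)"
proof -
  have "A * B * X = A * (X * B)"
    using A B X BX by simp
  also have "\<dots> = A * X * B"
    using A B X by simp
  also have "\<dots> = X * (A * B)"
    unfolding AX using A B X by simp
  finally show ?thesis .
qed

section \<open>Block matrices\<close>

definition block_diag :: "'a::zero mat \<Rightarrow> 'a mat \<Rightarrow> 'a mat" where
  "block_diag A B = four_block_mat A (0\<^sub>m (dim_row A) (dim_col B)) (0\<^sub>m (dim_row B) (dim_col A)) B"

definition swap_mat :: "nat \<Rightarrow> 'a::{zero,one} mat" where
  "swap_mat d = four_block_mat (0\<^sub>m d d) (1\<^sub>m d) (1\<^sub>m d) (0\<^sub>m d d)"

lemma block_diag_carrier [simp, intro]: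
  "A \<in> carrier_mat r c \<Longrightarrow> B \<in> carrier_mat r' c' \<Longrightarrow> block_diag A B \<in> carrier_mat (r + r') (c + c')"
  unfolding block_diag_def by auto

lemma dim_block_diag [simp]:
  "dim_row (block_diag A B) = dim_row A + dim_row B"
  "dim_col (block_diag A B) = dim_col A + dim_col B"
  unfolding block_diag_def by auto

lemma swap_mat_carrier [simp, intro]: "swap_mat d \<in> carrier_mat (d + d) (d + d)"
  unfolding swap_mat_def by auto

lemma block_diag_mult:
  fixes A :: "'a::semiring_0 mat"
  assumes "A \<in> carrier_mat r k" "B \<in> carrier_mat r' k'" "C \<in> carrier_mat k c" "D \<in> carrier_mat k' c'"
  shows "block_diag A B * block_diag C D = block_diag (A * C) (B * D)"
  unfolding block_diag_def using assms
  by (subst mult_four_block_mat[of _ r k _ k' _ r' _ _ c _ c']) auto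

lemma block_diag_mult_square:
  fixes A :: "'a::semiring_0 mat"
  assumes "A \<in> carrier_mat d d" "B \<in> carrier_mat d d" "C \<in> carrier_mat d d" "D \<in> carrier_mat d d"
  shows "block_diag A B * block_diag C D = block_diag (A * C) (B * D)"
  using assms by (rule block_diag_mult)

lemma block_diag_add:
  fixes A :: "'a::monoid_add mat"
  assumes "A \<in> carrier_mat r c" "B \<in> carrier_mat r' c'" "C \<in> carrier_mat r c" "D \<in> carrier_mat r' c'"
  shows "block_diag A B + block_diag C D = block_diag (A + C) (B + D)"
  unfolding block_diag_def using assms by (intro eq_matI) auto

lemma block_diag_minus:
  fixes A :: "'a::group_add mat"
  assumes "A \<in> carrier_mat r c" "B \<in> carrier_mat r' c'" "C \<in> carrier_mat r c" "D \<in> carrier_mat r' c'"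
  shows "block_diag A B - block_diag C D = block_diag (A - C) (B - D)"
  unfolding block_diag_def using assms by (intro eq_matI) auto

lemma smult_block_diag:
  fixes A :: "'a::semiring_0 mat"
  shows "a \<cdot>\<^sub>m block_diag A B = block_diag (a \<cdot>\<^sub>m A) (a \<cdot>\<^sub>m B)"
  unfolding block_diag_def by (intro eq_matI) auto

lemma block_diag_one: "block_diag (1\<^sub>m d) (1\<^sub>m d') = (1\<^sub>m (d + d') :: 'a::{zero,one} mat)"
  unfolding block_diag_def by (intro eq_matI) auto

lemma block_diag_zero: "block_diag (0\<^sub>m r c) (0\<^sub>m r' c') = (0\<^sub>m (r + r') (c + c') :: 'a::zero mat)"
  unfolding block_diag_def by (intro eq_matI) auto

lemma block_diag_quadratic:
  fixes A :: "'a::comm_ring_1 mat"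
  assumes A: "A \<in> carrier_mat d d" and B: "B \<in> carrier_mat d d"
  shows "(block_diag A B + 1\<^sub>m (d + d)) * (block_diag A B - q \<cdot>\<^sub>m 1\<^sub>m (d + d))
    = block_diag ((A + 1\<^sub>m d) * (A - q \<cdot>\<^sub>m 1\<^sub>m d)) ((B + 1\<^sub>m d) * (B - q \<cdot>\<^sub>m 1\<^sub>m d))"
proof -
  have plus: "block_diag A B + 1\<^sub>m (d + d) = block_diag (A + 1\<^sub>m d) (B + 1\<^sub>m d)"
    and minus: "block_diag A B - q \<cdot>\<^sub>m 1\<^sub>m (d + d) = block_diag (A - q \<cdot>\<^sub>m 1\<^sub>m d) (B - q \<cdot>\<^sub>m 1\<^sub>m d)"
    using A B by (simp_all add: block_diag_one[symmetric] block_diag_add[of _ d d _ d d]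
        smult_block_diag block_diag_minus[of _ d d _ d d])
  show ?thesis
    unfolding plus minus using A B by (intro block_diag_mult_square) auto
qed

lemma swap_mat_mult_block_diag:
  fixes A :: "'a::semiring_1 mat"
  assumes "A \<in> carrier_mat r c" "B \<in> carrier_mat r c"
  shows "swap_mat r * block_diag A B = block_diag B A * swap_mat c"
  unfolding block_diag_def swap_mat_def using assms
  by (subst mult_four_block_mat[of _ r r _ r _ r _ _ c _ c], auto,
      subst mult_four_block_mat[of _ r c _ c _ r _ _ c _ c], auto)

lemma swap_mat_squared: "swap_mat d * swap_mat d = (1\<^sub>m (d + d) :: 'a::semiring_1 mat)"
  unfolding swap_mat_def by (subst mult_four_block_mat[of _ d d _ d _ d _ _ d _ d]) auto

lemma swap_mat_conj_block_diag:
  fixes A :: "'a::semiring_1 mat"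
  assumes A: "A \<in> carrier_mat d d" and B: "B \<in> carrier_mat d d"
  shows "swap_mat d * block_diag A B * swap_mat d = block_diag B A"
  using A B by (simp add: swap_mat_mult_block_diag swap_mat_squared
      assoc_mult_mat[of _ "d + d" "d + d" _ "d + d" _ "d + d"])

lemma swap_mat_block_diag_braid:
  fixes A :: "'a::semiring_1 mat"
  assumes A: "A \<in> carrier_mat d d" and B: "B \<in> carrier_mat d d" and AB: "A * B = B * A"
  shows "swap_mat d * block_diag A B * swap_mat d * block_diag A B
    = block_diag A B * swap_mat d * block_diag A B * swap_mat d"
proof -
  let ?X = "swap_mat d :: 'a mat" and ?Y = "block_diag A B"
  have X: "?X \<in> carrier_mat (d + d) (d + d)" and Y: "?Y \<in> carrier_mat (d + d) (d + d)"
    using A B by auto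
  have conj: "?X * ?Y * ?X = block_diag B A"
    using A B by (rule swap_mat_conj_block_diag)
  have "?X * ?Y * ?X * ?Y = block_diag B A * ?Y"
    by (simp only: conj)
  also have "\<dots> = block_diag (B * A) (A * B)"
    by (rule block_diag_mult_square[OF B A A B])
  also have "\<dots> = block_diag (A * B) (B * A)"
    by (simp only: AB)
  also have "\<dots> = ?Y * block_diag B A"
    by (rule block_diag_mult_square[OF A B B A, symmetric])
  also have "\<dots> = ?Y * ?X * ?Y * ?X"
    unfolding conj[symmetric]
    by (simp only: assoc_mult_mat[OF Y mult_carrier_mat[OF X Y] X, symmetric]
        assoc_mult_mat[OF Y X Y, symmetric])
  finally show ?thesis .
qed

lemma block_diag_commute:
  fixes A :: "'a::semiring_0 mat"
  assumes "A \<in> carrier_mat d d" "B \<in> carrier_mat d d" "C \<in> carrier_mat d d" "D \<in> carrier_mat d d"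
    and "A * C = C * A" "B * D = D * B"
  shows "block_diag A B * block_diag C D = block_diag C D * block_diag A B"
  using assms by (simp add: block_diag_mult_square)

lemma block_diag_braid:
  fixes A :: "'a::semiring_0 mat"
  assumes "A \<in> carrier_mat d d" "B \<in> carrier_mat d d" "C \<in> carrier_mat d d" "D \<in> carrier_mat d d"
    and "A * C * A = C * A * C" "B * D * B = D * B * D"
  shows "block_diag A B * block_diag C D * block_diag A B = block_diag C D * block_diag A B * block_diag C D"
  using assms by (simp add: block_diag_mult_square[of _ d])

lemma block_diag_intertwine:
  fixes f :: "'a::semiring_0 mat"
  assumes f: "f \<in> carrier_mat r c" and A: "A \<in> carrier_mat c c" "B \<in> carrier_mat c c"
    and A': "A' \<in> carrier_mat r r" "B' \<in> carrier_mat r r"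
    and "f * A = A' * f" "f * B = B' * f"
  shows "block_diag f f * block_diag A B = block_diag A' B' * block_diag f f"
  using assms by (simp add: block_diag_mult[of _ r c _ r c _ c _ c] block_diag_mult[of _ r r _ r r _ c _ c])

lemma append_rows_mult:
  fixes X :: "'a::semiring_0 mat"
  assumes X: "X \<in> carrier_mat r k" and Y: "Y \<in> carrier_mat r' k" and C: "C \<in> carrier_mat k c"
  shows "(X @\<^sub>r Y) * C = (X * C) @\<^sub>r (Y * C)"
proof -
  have "C = four_block_mat C (0\<^sub>m k 0) (0\<^sub>m 0 c) (0\<^sub>m 0 0)"
    using C by (intro eq_matI) auto
  then have "(X @\<^sub>r Y) * C
      = four_block_mat X (0\<^sub>m r 0) Y (0\<^sub>m r' 0) * four_block_mat C (0\<^sub>m k 0) (0\<^sub>m 0 c) (0\<^sub>m 0 0)"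
    using X Y unfolding append_rows_def by auto
  also have "\<dots> = (X * C) @\<^sub>r (Y * C)"
    unfolding append_rows_def using assms
    by (subst mult_four_block_mat[of _ r k _ 0 _ r' _ _ c _ 0]) auto
  finally show ?thesis .
qed

lemma block_diag_mult_append_rows:
  fixes A :: "'a::semiring_0 mat"
  assumes "A \<in> carrier_mat r k" "B \<in> carrier_mat r' k'" "X \<in> carrier_mat k c" "Y \<in> carrier_mat k' c"
  shows "block_diag A B * (X @\<^sub>r Y) = (A * X) @\<^sub>r (B * Y)"
  unfolding append_rows_def block_diag_def using assms
  by (subst mult_four_block_mat[of _ r k _ k' _ r' _ _ c _ 0]) auto

lemma swap_mat_mult_append_rows:
  fixes X :: "'a::semiring_1 mat"
  assumes "X \<in> carrier_mat d c" "Y \<in> carrier_mat d c"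
  shows "swap_mat d * (X @\<^sub>r Y) = Y @\<^sub>r X"
  unfolding append_rows_def swap_mat_def using assms
  by (subst mult_four_block_mat[of _ d d _ d _ d _ _ c _ 0]) auto

lemma append_rows_inject:
  assumes "X \<in> carrier_mat r c" "Y \<in> carrier_mat r' c" "X' \<in> carrier_mat r c" "Y' \<in> carrier_mat r' c"
  shows "X @\<^sub>r Y = X' @\<^sub>r Y' \<longleftrightarrow> X = X' \<and> Y = Y'"
proof
  assume eq: "X @\<^sub>r Y = X' @\<^sub>r Y'"
  have "X $$ (i, j) = X' $$ (i, j)" if "i < r" "j < c" for i j
    using arg_cong[OF eq, of "\<lambda>M. M $$ (i, j)"] assms that by (simp add: append_rows_def)
  moreover have "Y $$ (i, j) = Y' $$ (i, j)" if "i < r'" "j < c" for i j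
    using arg_cong[OF eq, of "\<lambda>M. M $$ (r + i, j)"] assms that by (simp add: append_rows_def)
  ultimately show "X = X' \<and> Y = Y'"
    using assms by (auto intro!: eq_matI)
qed simp

lemma append_rows_split:
  assumes "H \<in> carrier_mat (r + r') c"
  obtains X Y where "X \<in> carrier_mat r c" "Y \<in> carrier_mat r' c" "H = X @\<^sub>r Y"
proof
  show "mat r c (\<lambda>(i, j). H $$ (i, j)) \<in> carrier_mat r c"
    and "mat r' c (\<lambda>(i, j). H $$ (r + i, j)) \<in> carrier_mat r' c" by auto
  show "H = mat r c (\<lambda>(i, j). H $$ (i, j)) @\<^sub>r mat r' c (\<lambda>(i, j). H $$ (r + i, j))"
    using assms unfolding append_rows_def by (intro eq_matI) auto
qed

lemma surj_mat_block_diag: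
  fixes f :: "'a::field mat"
  assumes f: "f \<in> carrier_mat r c" and surj: "surj_mat f"
  shows "surj_mat (block_diag f f)"
proof -
  have "\<exists>v \<in> carrier_vec (c + c). block_diag f f *\<^sub>v v = w1 @\<^sub>v w2"
    if w: "w1 \<in> carrier_vec r" "w2 \<in> carrier_vec r" for w1 w2
  proof -
    obtain v1 where v1: "v1 \<in> carrier_vec c" "f *\<^sub>v v1 = w1"
      using surj w f unfolding surj_mat_def by fastforce
    obtain v2 where v2: "v2 \<in> carrier_vec c" "f *\<^sub>v v2 = w2"
      using surj w f unfolding surj_mat_def by fastforce
    have "block_diag f f *\<^sub>v (v1 @\<^sub>v v2) = w1 @\<^sub>v w2"
      unfolding block_diag_def using f v1 v2 w
      by (subst four_block_mat_mult_vec[of _ r c _ c _ r]) auto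
    then show ?thesis
      using v1 v2 by blast
  qed
  then show ?thesis
    using f by (simp add: surj_mat_def all_vec_append)
qed

lemma surj_mat_mult:
  fixes A B :: "'a::field mat"
  assumes A: "A \<in> carrier_mat r k" and B: "B \<in> carrier_mat k c"
    and surj: "surj_mat A" "surj_mat B"
  shows "surj_mat (A * B)"
  unfolding surj_mat_def
proof
  fix w :: "'a vec" assume "w \<in> carrier_vec (dim_row (A * B))"
  then obtain u where u: "u \<in> carrier_vec k" "A *\<^sub>v u = w"
    using surj(1) A unfolding surj_mat_def by auto
  then obtain v where v: "v \<in> carrier_vec c" "B *\<^sub>v v = u"
    using surj(2) B unfolding surj_mat_def by auto
  show "\<exists>v \<in> carrier_vec (dim_col (A * B)). A * B *\<^sub>v v = w"
    using A B u v by (intro bexI[of _ v]) auto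
qed

lemma surj_mat_right_inverse:
  fixes A :: "'a::field mat"
  assumes A: "A \<in> carrier_mat r c" and surj: "surj_mat A"
  obtains R where "R \<in> carrier_mat c r" "A * R = 1\<^sub>m r"
proof -
  have "\<forall>j. \<exists>v. j < r \<longrightarrow> v \<in> carrier_vec c \<and> A *\<^sub>v v = unit_vec r j"
    using surj A unfolding surj_mat_def by auto
  then obtain V where V: "\<And>j. j < r \<Longrightarrow> V j \<in> carrier_vec c \<and> A *\<^sub>v V j = unit_vec r j"
    by metis
  let ?R = "mat c r (\<lambda>(i, j). V j $ i)"
  have "A * ?R = 1\<^sub>m r"
  proof (rule eq_matI)
    fix i j assume ij: "i < dim_row (1\<^sub>m r :: 'a mat)" "j < dim_col (1\<^sub>m r :: 'a mat)"
    have "col ?R j = V j"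
      using V[of j] ij by (intro eq_vecI) auto
    then have "(A * ?R) $$ (i, j) = (A *\<^sub>v V j) $ i"
      using ij A by simp
    then show "(A * ?R) $$ (i, j) = 1\<^sub>m r $$ (i, j)"
      using V ij by (simp add: unit_vec_def)
  qed (use A in auto)
  then show thesis
    by (intro that[of ?R]) auto
qed

lemma two_sided_inverse_if_surj_mats:
  fixes h g :: "'a::field mat"
  assumes h: "h \<in> carrier_mat a b" and g: "g \<in> carrier_mat b a"
    and surj: "surj_mat h" "surj_mat g"
  obtains k where "k \<in> carrier_mat b a" "k * h = 1\<^sub>m b" "h * k = 1\<^sub>m a"
proof -
  obtain R1 where R1: "R1 \<in> carrier_mat b b" "g * h * R1 = 1\<^sub>m b"
    using surj_mat_right_inverse[of "g * h" b b] surj_mat_mult[OF g h surj(2,1)] g h by auto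
  obtain R2 where R2: "R2 \<in> carrier_mat a a" "h * g * R2 = 1\<^sub>m a"
    using surj_mat_right_inverse[of "h * g" a a] surj_mat_mult[OF h g surj] g h by auto
  have "R1 * (g * h) = 1\<^sub>m b"
    using mat_mult_left_right_inverse[of "g * h" b R1] R1 g h by auto
  then have left: "R1 * g * h = 1\<^sub>m b"
    using R1 g h by simp
  have right: "h * (g * R2) = 1\<^sub>m a"
    using R2 g h by simp
  have "R1 * g = R1 * g * (h * (g * R2))"
    unfolding right using R1 g by simp
  also have "\<dots> = R1 * g * h * (g * R2)"
    using R1 g h R2 by (intro assoc_mult_mat[symmetric, of _ b a _ b _ a]) auto
  also have "\<dots> = g * R2"
    using g R2 by (simp add: left)
  finally show thesis
    using left right g R2 by (intro that[of "g * R2"]) auto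
qed

section \<open>Restriction from type B to type D\<close>

lemma hecke_B_repD:
  assumes "hecke_B_rep q n (d, T)"
  shows "i < n \<Longrightarrow> T i \<in> carrier_mat d d"
    and "(T 0 + 1\<^sub>m d) * (T 0 - 1\<^sub>m d) = 0\<^sub>m d d"
    and "1 \<le> i \<Longrightarrow> i < n \<Longrightarrow> (T i + 1\<^sub>m d) * (T i - q \<cdot>\<^sub>m 1\<^sub>m d) = 0\<^sub>m d d"
    and "2 \<le> n \<Longrightarrow> T 0 * T 1 * T 0 * T 1 = T 1 * T 0 * T 1 * T 0"
    and "1 \<le> i \<Longrightarrow> i + 2 \<le> n \<Longrightarrow> T (i + 1) * T i * T (i + 1) = T i * T (i + 1) * T i"
    and "i + 1 < j \<Longrightarrow> j \<le> n - 1 \<Longrightarrow> T i * T j = T j * T i"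
  using assms unfolding hecke_B_rep_def Let_def by auto

lemma hecke_B_repI:
  assumes "\<And>i. i < n \<Longrightarrow> T i \<in> carrier_mat d d"
    and "(T 0 + 1\<^sub>m d) * (T 0 - 1\<^sub>m d) = 0\<^sub>m d d"
    and "\<And>i. 1 \<le> i \<Longrightarrow> i < n \<Longrightarrow> (T i + 1\<^sub>m d) * (T i - q \<cdot>\<^sub>m 1\<^sub>m d) = 0\<^sub>m d d"
    and "2 \<le> n \<Longrightarrow> T 0 * T 1 * T 0 * T 1 = T 1 * T 0 * T 1 * T 0"
    and "\<And>i. 1 \<le> i \<Longrightarrow> i + 2 \<le> n \<Longrightarrow> T (i + 1) * T i * T (i + 1) = T i * T (i + 1) * T i"
    and "\<And>i j. i + 1 < j \<Longrightarrow> j \<le> n - 1 \<Longrightarrow> T i * T j = T j * T i"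
  shows "hecke_B_rep q n (d, T)"
  using assms unfolding hecke_B_rep_def Let_def by auto

lemma hecke_D_repD:
  assumes "hecke_D_rep q n (d, S)"
  shows "i < n \<Longrightarrow> S i \<in> carrier_mat d d"
    and "i < n \<Longrightarrow> (S i + 1\<^sub>m d) * (S i - q \<cdot>\<^sub>m 1\<^sub>m d) = 0\<^sub>m d d"
    and "3 \<le> n \<Longrightarrow> S 0 * S 2 * S 0 = S 2 * S 0 * S 2"
    and "1 \<le> i \<Longrightarrow> i < n \<Longrightarrow> i \<noteq> 2 \<Longrightarrow> S 0 * S i = S i * S 0"
    and "1 \<le> i \<Longrightarrow> i + 2 \<le> n \<Longrightarrow> S (i + 1) * S i * S (i + 1) = S i * S (i + 1) * S i"
    and "1 \<le> i \<Longrightarrow> i + 1 < j \<Longrightarrow> j \<le> n - 1 \<Longrightarrow> S i * S j = S j * S i"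
  using assms unfolding hecke_D_rep_def Let_def by auto

lemma hecke_D_repI:
  assumes "\<And>i. i < n \<Longrightarrow> S i \<in> carrier_mat d d"
    and "\<And>i. i < n \<Longrightarrow> (S i + 1\<^sub>m d) * (S i - q \<cdot>\<^sub>m 1\<^sub>m d) = 0\<^sub>m d d"
    and "3 \<le> n \<Longrightarrow> S 0 * S 2 * S 0 = S 2 * S 0 * S 2"
    and "\<And>i. 1 \<le> i \<Longrightarrow> i < n \<Longrightarrow> i \<noteq> 2 \<Longrightarrow> S 0 * S i = S i * S 0"
    and "\<And>i. 1 \<le> i \<Longrightarrow> i + 2 \<le> n \<Longrightarrow> S (i + 1) * S i * S (i + 1) = S i * S (i + 1) * S i"
    and "\<And>i j. 1 \<le> i \<Longrightarrow> i + 1 < j \<Longrightarrow> j \<le> n - 1 \<Longrightarrow> S i * S j = S j * S i"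
  shows "hecke_D_rep q n (d, S)"
  using assms unfolding hecke_D_rep_def Let_def by auto

lemma hecke_D_rep_carrier:
  "hecke_D_rep q n M \<Longrightarrow> i < n \<Longrightarrow> snd M i \<in> carrier_mat (fst M) (fst M)"
  unfolding hecke_D_rep_def Let_def by auto

lemma hecke_B_rep_T0_involution:
  assumes "hecke_B_rep q n (d, T)" and "0 < n"
  shows "T 0 * T 0 = 1\<^sub>m d"
  using assms by (intro mat_involution_if_quadratic hecke_B_repD) auto

lemma Res_pair: "Res (d, T) = (d, \<lambda>i. if i = 0 then T 0 * T 1 * T 0 else T i)"
  unfolding Res_def prod.sel by (rule refl)

lemma Res_braid_02:
  assumes B: "hecke_B_rep q n (d, T)" and n3: "3 \<le> n"
  shows "T 0 * T 1 * T 0 * T 2 * (T 0 * T 1 * T 0) = T 2 * (T 0 * T 1 * T 0) * T 2"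
proof -
  have C0: "T 0 \<in> carrier_mat d d" and C1: "T 1 \<in> carrier_mat d d" and C2: "T 2 \<in> carrier_mat d d"
    using hecke_B_repD(1)[OF B] n3 by auto
  have inv: "T 0 * T 0 = 1\<^sub>m d"
    using hecke_B_rep_T0_involution[OF B] n3 by simp
  have c02: "T 0 * T 2 = T 2 * T 0"
    using hecke_B_repD(6)[OF B, of 0 2] n3 by simp
  have braid12: "T 1 * T 2 * T 1 = T 2 * T 1 * T 2"
    using hecke_B_repD(5)[OF B, of 1] n3 by (simp add: numeral_2_eq_2)
  have "T 0 * T 1 * T 0 * T 2 * (T 0 * T 1 * T 0)
      = T 0 * (T 1 * (T 0 * (T 2 * (T 0 * (T 1 * T 0)))))"
    using C0 C1 C2 by (simp add: assoc_mult_mat[of _ d d _ d _ d])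
  also have "\<dots> = T 0 * (T 1 * (T 2 * (T 0 * (T 0 * (T 1 * T 0)))))"
    using C0 C1 by (subst mult_mat_left_commute[OF C0 C2 _ c02]) auto
  also have "\<dots> = T 0 * (T 1 * (T 2 * (T 1 * T 0)))"
    using C0 C1 by (subst mult_mat_involution_cancel[OF C0 _ inv]) auto
  also have "\<dots> = T 0 * (T 2 * (T 1 * (T 2 * T 0)))"
    using C0 by (subst mult_mat_assoc_cong[OF C1 C2 C1 C2 C1 C2 _ braid12]) auto
  also have "\<dots> = T 2 * (T 0 * (T 1 * (T 2 * T 0)))"
    using C0 C1 C2 by (subst mult_mat_left_commute[OF C0 C2 _ c02]) auto
  also have "\<dots> = T 2 * (T 0 * T 1 * T 0) * T 2"
    using C0 C1 C2 by (simp add: c02 assoc_mult_mat[of _ d d _ d _ d])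
  finally show ?thesis .
qed

lemma hecke_D_rep_Res:
  assumes B: "hecke_B_rep q n (d, T)" and n: "2 \<le> n"
  shows "hecke_D_rep q n (Res (d, T))"
proof -
  note C = hecke_B_repD(1)[OF B]
  have C0: "T 0 \<in> carrier_mat d d" and C1: "T 1 \<in> carrier_mat d d"
    using C n by auto
  have inv: "T 0 * T 0 = 1\<^sub>m d"
    using hecke_B_rep_T0_involution[OF B] n by simp
  have commute0: "T 0 * T i = T i * T 0" if "2 \<le> i" "i < n" for i
    using hecke_B_repD(6)[OF B, of 0 i] that by simp
  let ?S = "\<lambda>i. if i = 0 then T 0 * T 1 * T 0 else T i"
  have "hecke_D_rep q n (d, ?S)"
  proof (rule hecke_D_repI)
    show "?S i \<in> carrier_mat d d" if "i < n" for i
      using C C0 C1 that by (auto intro: mult_carrier_mat)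
    show "(?S i + 1\<^sub>m d) * (?S i - q \<cdot>\<^sub>m 1\<^sub>m d) = 0\<^sub>m d d" if "i < n" for i
    proof (cases "i = 0")
      case True
      then show ?thesis
        using quadratic_conj_involution[OF C0 C1 inv] hecke_B_repD(3)[OF B, of 1] n C0 by simp
    next
      case False
      then show ?thesis
        using hecke_B_repD(3)[OF B, of i] that by simp
    qed
    show "?S 0 * ?S 2 * ?S 0 = ?S 2 * ?S 0 * ?S 2" if "3 \<le> n"
      using Res_braid_02[OF B that] by simp
    show "?S 0 * ?S i = ?S i * ?S 0" if "1 \<le> i" "i < n" "i \<noteq> 2" for i
    proof (cases "i = 1")
      case True
      then show ?thesis
        using hecke_B_repD(4)[OF B] n C0 C1 by (simp add: assoc_mult_mat[of _ d d _ d _ d])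
    next
      case False
      have Ci: "T i \<in> carrier_mat d d"
        using C that by simp
      have c0: "T 0 * T i = T i * T 0"
        using commute0 that False by simp
      have c1: "T 1 * T i = T i * T 1"
        using hecke_B_repD(6)[OF B, of 1 i] that False by simp
      have "T 0 * T 1 * T i = T i * (T 0 * T 1)"
        by (rule mult_mat_commute_product[OF C0 C1 Ci c0 c1])
      then have "T 0 * T 1 * T 0 * T i = T i * (T 0 * T 1 * T 0)"
        using C0 C1 by (intro mult_mat_commute_product[OF _ C0 Ci _ c0]) auto
      then show ?thesis
        using that by simp
    qed
    show "?S (i + 1) * ?S i * ?S (i + 1) = ?S i * ?S (i + 1) * ?S i" if "1 \<le> i" "i + 2 \<le> n" for i
      using hecke_B_repD(5)[OF B] that by simp
    show "?S i * ?S j = ?S j * ?S i" if "1 \<le> i" "i + 1 < j" "j \<le> n - 1" for i j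
      using hecke_B_repD(6)[OF B] that by simp
  qed
  then show ?thesis
    by (simp add: Res_pair)
qed

lemma fst_Res [simp]: "fst (Res M) = fst M"
  unfolding Res_def by simp

lemma transpose_01_less:
  fixes i n :: nat
  assumes "i < n" and "2 \<le> n"
  shows "Transposition.transpose 0 1 i < n"
  using assms by (simp add: Transposition.transpose_def)

lemma Res_T0_conj:
  assumes B: "hecke_B_rep q n (d, T)" and n: "2 \<le> n" and i: "i < n"
  shows "T 0 * snd (Res (d, T)) i = snd (Res (d, T)) (Transposition.transpose 0 1 i) * T 0"
proof -
  have C0: "T 0 \<in> carrier_mat d d" and C1: "T 1 \<in> carrier_mat d d"
    using hecke_B_repD(1)[OF B] n by auto
  have inv: "T 0 * T 0 = 1\<^sub>m d"
    using hecke_B_rep_T0_involution[OF B] n by simp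
  consider "i = 0" | "i = 1" | "2 \<le> i"
    by linarith
  then show ?thesis
  proof cases
    case 1
    have "T 0 * (T 0 * T 1 * T 0) = T 0 * T 0 * T 1 * T 0"
      using C0 C1 by (simp add: assoc_mult_mat[of _ d d _ d _ d])
    then show ?thesis
      using 1 C1 inv by (simp add: Res_pair)
  next
    case 2
    have "T 0 * T 1 * T 0 * T 0 = T 0 * T 1 * (T 0 * T 0)"
      using C0 C1 by (simp add: assoc_mult_mat[of _ d d _ d _ d])
    then show ?thesis
      using 2 C0 C1 inv by (simp add: Res_pair)
  next
    case 3
    then show ?thesis
      using hecke_B_repD(6)[OF B, of 0 i] i by (simp add: Res_pair)
  qed
qed

section \<open>Coinduction from type D to type B\<close>

(* Ind N = N (+) T_0 N: on the second summand T_1 acts through T_1 T_0 = T_0 (T_0 T_1 T_0),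
   that is, by the D-generator 0. *)
definition Ind :: "'a::field rep \<Rightarrow> 'a rep" where
  "Ind N = (fst N + fst N, \<lambda>i. if i = 0 then swap_mat (fst N)
     else if i = 1 then block_diag (snd N 1) (snd N 0) else block_diag (snd N i) (snd N i))"

lemma Ind_pair:
  "Ind (d, S) = (d + d, \<lambda>i. if i = 0 then swap_mat d
     else if i = 1 then block_diag (S 1) (S 0) else block_diag (S i) (S i))"
  unfolding Ind_def prod.sel by (rule refl)

lemma Ind_braid:
  assumes D: "hecke_D_rep q n (d, S)" and i: "1 \<le> i" "i + 2 \<le> n"
  shows "snd (Ind (d, S)) (i + 1) * snd (Ind (d, S)) i * snd (Ind (d, S)) (i + 1)
    = snd (Ind (d, S)) i * snd (Ind (d, S)) (i + 1) * snd (Ind (d, S)) i"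
proof (cases "i = 1")
  case True
  have C: "S 0 \<in> carrier_mat d d" "S 1 \<in> carrier_mat d d" "S 2 \<in> carrier_mat d d"
    using hecke_D_repD(1)[OF D] i True by auto
  have "block_diag (S 2) (S 2) * block_diag (S 1) (S 0) * block_diag (S 2) (S 2)
      = block_diag (S 1) (S 0) * block_diag (S 2) (S 2) * block_diag (S 1) (S 0)"
    using hecke_D_repD(3)[OF D] hecke_D_repD(5)[OF D, of 1] i True
    by (intro block_diag_braid[OF C(3) C(3) C(2) C(1)]) (simp_all add: numeral_2_eq_2)
  then show ?thesis
    using True by (simp add: Ind_pair numeral_2_eq_2)
next
  case False
  have "S (i + 1) \<in> carrier_mat d d" "S i \<in> carrier_mat d d"
    using hecke_D_repD(1)[OF D] i by auto
  with False show ?thesis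
    using hecke_D_repD(5)[OF D, of i] i by (simp add: Ind_pair block_diag_braid)
qed

lemma Ind_commute:
  assumes D: "hecke_D_rep q n (d, S)" and ij: "i + 1 < j" "j \<le> n - 1"
  shows "snd (Ind (d, S)) i * snd (Ind (d, S)) j = snd (Ind (d, S)) j * snd (Ind (d, S)) i"
proof -
  note C = hecke_D_repD(1)[OF D]
  have Cj: "S j \<in> carrier_mat d d"
    using C ij by simp
  consider "i = 0" | "i = 1" | "2 \<le> i"
    by linarith
  then show ?thesis
  proof cases
    case 1
    then show ?thesis
      using ij Cj by (simp add: Ind_pair swap_mat_mult_block_diag)
  next
    case 2
    have "S 0 \<in> carrier_mat d d" "S 1 \<in> carrier_mat d d"
      using C ij by auto
    with 2 show ?thesis
      using ij Cj hecke_D_repD(4)[OF D, of j] hecke_D_repD(6)[OF D, of 1 j]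
      by (simp add: Ind_pair block_diag_commute)
  next
    case 3
    have "S i \<in> carrier_mat d d"
      using C ij by simp
    with 3 show ?thesis
      using ij Cj hecke_D_repD(6)[OF D, of i j] by (simp add: Ind_pair block_diag_commute)
  qed
qed

lemma hecke_B_rep_Ind:
  assumes D: "hecke_D_rep q n (d, S)" and n: "2 \<le> n"
  shows "hecke_B_rep q n (Ind (d, S))"
proof -
  note C = hecke_D_repD(1)[OF D]
  have C0: "S 0 \<in> carrier_mat d d" and C1: "S 1 \<in> carrier_mat d d"
    using C n by auto
  have "hecke_B_rep q n (d + d, snd (Ind (d, S)))"
  proof (rule hecke_B_repI)
    show "snd (Ind (d, S)) i \<in> carrier_mat (d + d) (d + d)" if "i < n" for i
      using C C0 C1 that by (simp add: Ind_pair)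
    show "(snd (Ind (d, S)) 0 + 1\<^sub>m (d + d)) * (snd (Ind (d, S)) 0 - 1\<^sub>m (d + d))
        = 0\<^sub>m (d + d) (d + d)"
      by (simp add: Ind_pair mat_plus_one_mult_minus_one swap_mat_squared)
    show "(snd (Ind (d, S)) i + 1\<^sub>m (d + d)) * (snd (Ind (d, S)) i - q \<cdot>\<^sub>m 1\<^sub>m (d + d))
        = 0\<^sub>m (d + d) (d + d)" if "1 \<le> i" "i < n" for i
      using that C C0 hecke_D_repD(2)[OF D] n
      by (simp add: Ind_pair block_diag_quadratic block_diag_zero)
    have "S 1 * S 0 = S 0 * S 1"
      using hecke_D_repD(4)[OF D, of 1] n by simp
    then show "snd (Ind (d, S)) 0 * snd (Ind (d, S)) 1 * snd (Ind (d, S)) 0 * snd (Ind (d, S)) 1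
        = snd (Ind (d, S)) 1 * snd (Ind (d, S)) 0 * snd (Ind (d, S)) 1 * snd (Ind (d, S)) 0"
      using swap_mat_block_diag_braid[OF C1 C0] by (simp add: Ind_pair)
  qed (use Ind_braid[OF D] Ind_commute[OF D] in auto)
  then show ?thesis
    by (simp add: Ind_pair)
qed

lemma rep_hom_Ind:
  assumes M: "hecke_D_rep q n (dM, SM)" and N: "hecke_D_rep q n (dN, SN)"
    and f: "rep_hom n (dM, SM) (dN, SN) f" and n: "2 \<le> n"
  shows "rep_hom n (Ind (dM, SM)) (Ind (dN, SN)) (block_diag f f)"
proof -
  note CM = hecke_D_repD(1)[OF M] and CN = hecke_D_repD(1)[OF N]
  have fc: "f \<in> carrier_mat dN dM" and fS: "\<And>i. i < n \<Longrightarrow> f * SM i = SN i * f"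
    using f unfolding rep_hom_def by auto
  show ?thesis
    unfolding rep_hom_def Ind_pair fst_conv snd_conv
  proof (intro conjI allI impI)
    show "block_diag f f \<in> carrier_mat (dN + dN) (dM + dM)"
      using fc by simp
    fix i assume i: "i < n"
    consider "i = 0" | "i = 1" | "2 \<le> i"
      by linarith
    then show "block_diag f f * (if i = 0 then swap_mat dM
          else if i = 1 then block_diag (SM 1) (SM 0) else block_diag (SM i) (SM i))
        = (if i = 0 then swap_mat dN
          else if i = 1 then block_diag (SN 1) (SN 0) else block_diag (SN i) (SN i)) * block_diag f f"
    proof cases
      case 1
      then show ?thesis
        using swap_mat_mult_block_diag[OF fc fc] by simp
    next
      case 2
      then show ?thesis
        using n fc CM CN fS by (simp add: block_diag_intertwine)
    next
      case 3
      then show ?thesis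
        using i fc CM CN fS by (simp add: block_diag_intertwine)
    qed
  qed
qed

lemma rep_hom_Res_T0_twist:
  assumes B: "hecke_B_rep q n (d, T)" and N: "hecke_D_rep q n (dN, SN)" and n: "2 \<le> n"
    and g: "rep_hom n (Res (d, T)) (dN, SN) g" and i: "1 \<le> i" "i < n"
  shows "g * T 0 * T i = SN (Transposition.transpose 0 1 i) * (g * T 0)"
proof -
  let ?R = "snd (Res (d, T))" and ?j = "Transposition.transpose 0 1 i"
  have j: "?j < n"
    using i(2) n by (rule transpose_01_less)
  have gc: "g \<in> carrier_mat dN d" and gR: "g * ?R ?j = SN ?j * g"
    using g j unfolding rep_hom_def by auto
  have C0: "T 0 \<in> carrier_mat d d" and Ci: "T i \<in> carrier_mat d d"
    using hecke_B_repD(1)[OF B] i n by auto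
  have Rj: "?R ?j \<in> carrier_mat d d"
    using hecke_D_rep_carrier[OF hecke_D_rep_Res[OF B n] j] by simp
  have "?R i = T i"
    using i by (simp add: Res_pair)
  then have T0Ti: "T 0 * T i = ?R ?j * T 0"
    using Res_T0_conj[OF B n i(2)] by simp
  have "g * T 0 * T i = g * (?R ?j * T 0)"
    unfolding T0Ti[symmetric] using gc C0 Ci by (rule assoc_mult_mat)
  also have "\<dots> = SN ?j * g * T 0"
    unfolding gR[symmetric] using gc Rj C0 by (rule assoc_mult_mat[symmetric])
  also have "\<dots> = SN ?j * (g * T 0)"
    using hecke_D_repD(1)[OF N j] gc C0 by (rule assoc_mult_mat)
  finally show ?thesis .
qed

lemma rep_hom_into_Ind:
  assumes B: "hecke_B_rep q n (d, T)" and N: "hecke_D_rep q n (dN, SN)"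
    and g: "rep_hom n (Res (d, T)) (dN, SN) g" and n: "2 \<le> n"
  shows "rep_hom n (d, T) (Ind (dN, SN)) (g @\<^sub>r (g * T 0))"
proof -
  note C = hecke_B_repD(1)[OF B] and CN = hecke_D_repD(1)[OF N]
  have C0: "T 0 \<in> carrier_mat d d"
    using C n by auto
  have gc: "g \<in> carrier_mat dN d" and gT0c: "g * T 0 \<in> carrier_mat dN d"
    using g C0 unfolding rep_hom_def Res_pair by auto
  have gS: "g * T i = SN i * g" if "1 \<le> i" "i < n" for i
    using g that unfolding rep_hom_def Res_pair by auto
  show ?thesis
    unfolding rep_hom_def Ind_pair fst_conv snd_conv
  proof (intro conjI allI impI)
    show "g @\<^sub>r (g * T 0) \<in> carrier_mat (dN + dN) d"
      using gc gT0c by simp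
    fix i assume i: "i < n"
    have split: "(g @\<^sub>r (g * T 0)) * T i = (g * T i) @\<^sub>r (g * T 0 * T i)"
      using gc gT0c C[OF i] by (rule append_rows_mult)
    consider "i = 0" | "i = 1" | "2 \<le> i"
      by linarith
    then show "(g @\<^sub>r (g * T 0)) * T i = (if i = 0 then swap_mat dN
          else if i = 1 then block_diag (SN 1) (SN 0) else block_diag (SN i) (SN i)) * (g @\<^sub>r (g * T 0))"
    proof cases
      case 1
      have "g * T 0 * T 0 = g"
        using gc C0 hecke_B_rep_T0_involution[OF B] n by simp
      then show ?thesis
        using 1 split swap_mat_mult_append_rows[OF gc gT0c] by simp
    next
      case 2
      then show ?thesis
        using split gS[of 1] rep_hom_Res_T0_twist[OF B N n g, of 1] n gc gT0c CN[of 0] CN[of 1]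
        by (simp add: block_diag_mult_append_rows)
    next
      case 3
      then show ?thesis
        using split gS[of i] rep_hom_Res_T0_twist[OF B N n g, of i] i gc gT0c CN[of i]
        by (simp add: block_diag_mult_append_rows)
    qed
  qed
qed

lemma rep_hom_from_Ind:
  assumes B: "hecke_B_rep q n (d, T)" and M: "hecke_D_rep q n (dM, SM)"
    and H: "rep_hom n (d, T) (Ind (dM, SM)) (X @\<^sub>r Y)"
    and X: "X \<in> carrier_mat dM d" and Y: "Y \<in> carrier_mat dM d" and n: "2 \<le> n"
  shows "rep_hom n (Res (d, T)) (dM, SM) X"
proof -
  note C = hecke_B_repD(1)[OF B] and CM = hecke_D_repD(1)[OF M]
  have C0: "T 0 \<in> carrier_mat d d" and C1: "T 1 \<in> carrier_mat d d"
    using C n by auto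
  have HT: "(X * T i) @\<^sub>r (Y * T i) = (if i = 0 then swap_mat dM
      else if i = 1 then block_diag (SM 1) (SM 0) else block_diag (SM i) (SM i)) * (X @\<^sub>r Y)"
    if "i < n" for i
    using H that append_rows_mult[OF X Y C[OF that]] unfolding rep_hom_def Ind_pair by simp
  have XT0: "X * T 0 = Y"
    using HT[of 0] n X Y C0
    by (simp add: swap_mat_mult_append_rows append_rows_inject[of "X * T 0" dM d "Y * T 0" dM])
  have "(X * T 1) @\<^sub>r (Y * T 1) = (SM 1 * X) @\<^sub>r (SM 0 * Y)"
    using HT[of 1] n X Y CM[of 0] CM[of 1] by (simp add: block_diag_mult_append_rows)
  then have T1: "X * T 1 = SM 1 * X \<and> Y * T 1 = SM 0 * Y"
    using X Y C1 CM[of 0] CM[of 1] n by (subst (asm) append_rows_inject[of _ dM d _ dM]) auto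
  have Ti: "X * T i = SM i * X" if "2 \<le> i" "i < n" for i
    using HT[of i] that X Y C[of i] CM[of i]
    by (simp add: block_diag_mult_append_rows append_rows_inject[of "X * T i" dM d "Y * T i" dM])
  have "X * (T 0 * T 1 * T 0) = SM 0 * X"
  proof -
    have "X * (T 0 * T 1 * T 0) = X * T 0 * T 1 * T 0"
      using X C0 C1 by (simp add: assoc_mult_mat[of _ dM d _ d _ d])
    also have "\<dots> = SM 0 * (Y * T 0)"
      using XT0 T1 Y C0 CM[of 0] n by simp
    also have "Y * T 0 = X"
      using XT0 X C0 hecke_B_rep_T0_involution[OF B] n by (simp flip: XT0)
    finally show ?thesis .
  qed
  moreover have "X * T i = SM i * X" if "1 \<le> i" "i < n" for i
    using T1 Ti[of i] that by (cases "i = 1") auto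
  ultimately show ?thesis
    using X unfolding rep_hom_def Res_pair by auto
qed

lemma projective_repD:
  assumes "projective_rep isrep n P"
  shows "isrep P"
    and "isrep M \<Longrightarrow> isrep N \<Longrightarrow> rep_hom n M N f \<Longrightarrow> surj_mat f \<Longrightarrow> rep_hom n P N g
      \<Longrightarrow> \<exists>h. rep_hom n P M h \<and> f * h = g"
  using assms unfolding projective_rep_def by blast+

lemma projective_rep_Res:
  assumes P: "projective_rep (hecke_B_rep q n) n (d, T)" and n: "2 \<le> n"
  shows "projective_rep (hecke_D_rep q n) n (Res (d, T))"
  unfolding projective_rep_def
proof (intro conjI allI impI)
  have B: "hecke_B_rep q n (d, T)"
    using P by (rule projective_repD)
  then show "hecke_D_rep q n (Res (d, T))"
    using n by (rule hecke_D_rep_Res)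
  fix M N f g
  assume "hecke_D_rep q n M \<and> hecke_D_rep q n N \<and> rep_hom n M N f \<and> surj_mat f
    \<and> rep_hom n (Res (d, T)) N g"
  moreover obtain dM SM dN SN where "M = (dM, SM)" "N = (dN, SN)"
    by fastforce
  ultimately have M: "hecke_D_rep q n (dM, SM)" and N: "hecke_D_rep q n (dN, SN)"
    and f: "rep_hom n (dM, SM) (dN, SN) f" "surj_mat f"
    and g: "rep_hom n (Res (d, T)) (dN, SN) g" and MN: "M = (dM, SM)" "N = (dN, SN)"
    by auto
  have fc: "f \<in> carrier_mat dN dM" and gc: "g \<in> carrier_mat dN d"
    using f g unfolding rep_hom_def Res_pair by auto
  have gT0c: "g * T 0 \<in> carrier_mat dN d"
    using gc hecke_B_repD(1)[OF B, of 0] n by simp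
  obtain H where H: "rep_hom n (d, T) (Ind (dM, SM)) H"
    and lift: "block_diag f f * H = g @\<^sub>r (g * T 0)"
    using projective_repD(2)[OF P hecke_B_rep_Ind[OF M n] hecke_B_rep_Ind[OF N n]
        rep_hom_Ind[OF M N f(1) n] surj_mat_block_diag[OF fc f(2)] rep_hom_into_Ind[OF B N g n]]
    by blast
  have "H \<in> carrier_mat (dM + dM) d"
    using H unfolding rep_hom_def Ind_pair by simp
  then obtain X Y where X: "X \<in> carrier_mat dM d" and Y: "Y \<in> carrier_mat dM d" and HXY: "H = X @\<^sub>r Y"
    by (rule append_rows_split)
  have "f * X = g"
    using lift fc X Y gc gT0c unfolding HXY
    by (simp add: block_diag_mult_append_rows append_rows_inject[of "f * X" dN d "f * Y" dN])
  moreover have "rep_hom n (Res (d, T)) (dM, SM) X"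
    using B M H X Y n unfolding HXY by (rule rep_hom_from_Ind)
  ultimately show "\<exists>h. rep_hom n (Res (d, T)) M h \<and> f * h = g"
    unfolding MN by blast
qed

section \<open>Projective covers\<close>

definition superfluous_kernel :: "nat \<Rightarrow> 'a::field rep \<Rightarrow> 'a rep \<Rightarrow> 'a mat \<Rightarrow> bool" where
  "superfluous_kernel n P S \<pi> \<longleftrightarrow> (\<forall>U. submodule n P U \<and>
     {u + k | u k. u \<in> U \<and> k \<in> carrier_vec (fst P) \<and> \<pi> *\<^sub>v k = 0\<^sub>v (fst S)} = carrier_vec (fst P)
     \<longrightarrow> U = carrier_vec (fst P))"

lemma projective_cover_iff:
  "projective_cover isrep n P S \<longleftrightarrow> projective_rep isrep n P \<and> isrep S \<and>
     (\<exists>\<pi>. rep_hom n P S \<pi> \<and> surj_mat \<pi> \<and> superfluous_kernel n P S \<pi>)"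
  unfolding projective_cover_def superfluous_kernel_def by (rule refl)

lemma submodule_range:
  assumes h: "rep_hom n P Q h"
    and CQ: "\<And>i. i < n \<Longrightarrow> snd Q i \<in> carrier_mat (fst Q) (fst Q)"
    and CP: "\<And>i. i < n \<Longrightarrow> snd P i \<in> carrier_mat (fst P) (fst P)"
  shows "submodule n Q {h *\<^sub>v v | v. v \<in> carrier_vec (fst P)}"
  unfolding submodule_def
proof (intro conjI ballI allI impI)
  have hc: "h \<in> carrier_mat (fst Q) (fst P)" and comm: "\<And>i. i < n \<Longrightarrow> h * snd P i = snd Q i * h"
    using h unfolding rep_hom_def by auto
  show "{h *\<^sub>v v | v. v \<in> carrier_vec (fst P)} \<subseteq> carrier_vec (fst Q)"
    using hc by auto
  show "0\<^sub>v (fst Q) \<in> {h *\<^sub>v v | v. v \<in> carrier_vec (fst P)}"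
    using hc by (intro CollectI exI[of _ "0\<^sub>v (fst P)"]) auto
  fix u assume "u \<in> {h *\<^sub>v v | v. v \<in> carrier_vec (fst P)}"
  then obtain v where v: "v \<in> carrier_vec (fst P)" "u = h *\<^sub>v v"
    by auto
  show "u + w \<in> {h *\<^sub>v v | v. v \<in> carrier_vec (fst P)}"
    if w: "w \<in> {h *\<^sub>v v | v. v \<in> carrier_vec (fst P)}" for w
  proof -
    obtain v' where v': "v' \<in> carrier_vec (fst P)" "w = h *\<^sub>v v'"
      using w by blast
    have "u + w = h *\<^sub>v (v + v')"
      using v v' hc by (simp add: mult_add_distrib_mat_vec)
    then show ?thesis
      using v v' by auto
  qed
  show "c \<cdot>\<^sub>v u \<in> {h *\<^sub>v v | v. v \<in> carrier_vec (fst P)}" for c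
  proof -
    have "c \<cdot>\<^sub>v u = h *\<^sub>v (c \<cdot>\<^sub>v v)"
      using v hc by (simp add: mult_mat_vec)
    then show ?thesis
      using v by auto
  qed
  show "snd Q i *\<^sub>v u \<in> {h *\<^sub>v v | v. v \<in> carrier_vec (fst P)}" if i: "i < n" for i
  proof -
    have "snd Q i *\<^sub>v u = (h * snd P i) *\<^sub>v v"
      using v hc CQ[OF i] by (simp add: comm[OF i])
    also have "\<dots> = h *\<^sub>v (snd P i *\<^sub>v v)"
      using v hc CP[OF i] by simp
    finally show ?thesis
      using v CP[OF i] by auto
  qed
qed

lemma range_plus_kernel_eq_carrier:
  fixes h :: "'a::field mat"
  assumes h: "h \<in> carrier_mat b a" and \<pi>: "\<pi> \<in> carrier_mat c b"
    and \<pi>': "\<pi>' \<in> carrier_mat c a" "surj_mat \<pi>'" and lift: "\<pi> * h = \<pi>'"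
  shows "{u + k | u k. u \<in> {h *\<^sub>v v | v. v \<in> carrier_vec a} \<and> k \<in> carrier_vec b \<and> \<pi> *\<^sub>v k = 0\<^sub>v c}
    = carrier_vec b" (is "?sum = _")
proof (intro equalityI subsetI)
  show "x \<in> carrier_vec b" if "x \<in> ?sum" for x
  proof -
    obtain v k where "x = h *\<^sub>v v + k" "v \<in> carrier_vec a" "k \<in> carrier_vec b"
      using \<open>x \<in> ?sum\<close> by blast
    then show ?thesis
      using h by simp
  qed
  fix x :: "'a vec" assume x: "x \<in> carrier_vec b"
  obtain v where v: "v \<in> carrier_vec a" "\<pi>' *\<^sub>v v = \<pi> *\<^sub>v x"
    using \<pi>' \<pi> x unfolding surj_mat_def by fastforce
  have hv: "h *\<^sub>v v \<in> carrier_vec b"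
    using h v by simp
  have "\<pi> *\<^sub>v (x - h *\<^sub>v v) = \<pi> *\<^sub>v x - (\<pi> * h) *\<^sub>v v"
    using \<pi> h x v by (simp add: mult_minus_distrib_mat_vec)
  also have "\<dots> = 0\<^sub>v c"
    using v \<pi> x unfolding lift by simp
  finally have "\<pi> *\<^sub>v (x - h *\<^sub>v v) = 0\<^sub>v c" .
  moreover have "x = h *\<^sub>v v + (x - h *\<^sub>v v)"
    using hv x h by (intro eq_vecI) auto
  moreover have "x - h *\<^sub>v v \<in> carrier_vec b"
    using x hv by simp
  moreover have "h *\<^sub>v v \<in> {h *\<^sub>v v | v. v \<in> carrier_vec a}"
    using v(1) by blast
  ultimately show "x \<in> ?sum"
    by blast
qed

lemma surj_mat_if_lifts_cover:
  assumes h: "rep_hom n P Q h" and \<pi>P: "rep_hom n P S \<pi>P" "surj_mat \<pi>P"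
    and \<pi>Q: "rep_hom n Q S \<pi>Q" "superfluous_kernel n Q S \<pi>Q" and lift: "\<pi>Q * h = \<pi>P"
    and CP: "\<And>i. i < n \<Longrightarrow> snd P i \<in> carrier_mat (fst P) (fst P)"
    and CQ: "\<And>i. i < n \<Longrightarrow> snd Q i \<in> carrier_mat (fst Q) (fst Q)"
  shows "surj_mat h"
proof -
  have hc: "h \<in> carrier_mat (fst Q) (fst P)" and \<pi>Pc: "\<pi>P \<in> carrier_mat (fst S) (fst P)"
    and \<pi>Qc: "\<pi>Q \<in> carrier_mat (fst S) (fst Q)"
    using h \<pi>P \<pi>Q unfolding rep_hom_def by auto
  define U where "U = {h *\<^sub>v v | v. v \<in> carrier_vec (fst P)}"
  have "submodule n Q U"
    unfolding U_def using h CQ CP by (rule submodule_range)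
  moreover have "{u + k | u k. u \<in> U \<and> k \<in> carrier_vec (fst Q) \<and> \<pi>Q *\<^sub>v k = 0\<^sub>v (fst S)}
      = carrier_vec (fst Q)"
    unfolding U_def by (rule range_plus_kernel_eq_carrier[OF hc \<pi>Qc \<pi>Pc \<pi>P(2) lift])
  ultimately have U: "U = carrier_vec (fst Q)"
    using \<pi>Q(2) unfolding superfluous_kernel_def by blast
  show ?thesis
    unfolding surj_mat_def
  proof
    fix w :: "'a vec" assume "w \<in> carrier_vec (dim_row h)"
    then have "w \<in> U"
      using U hc by simp
    then show "\<exists>v \<in> carrier_vec (dim_col h). h *\<^sub>v v = w"
      unfolding U_def using hc by auto
  qed
qed

lemma rep_hom_inverse:
  assumes h: "rep_hom n P Q h" and k: "k \<in> carrier_mat (fst P) (fst Q)"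
    and kh: "k * h = 1\<^sub>m (fst P)" and hk: "h * k = 1\<^sub>m (fst Q)"
    and CP: "\<And>i. i < n \<Longrightarrow> snd P i \<in> carrier_mat (fst P) (fst P)"
    and CQ: "\<And>i. i < n \<Longrightarrow> snd Q i \<in> carrier_mat (fst Q) (fst Q)"
  shows "rep_hom n Q P k"
  unfolding rep_hom_def
proof (intro conjI allI impI)
  show "k \<in> carrier_mat (fst P) (fst Q)"
    by (rule k)
  fix i assume i: "i < n"
  have hc: "h \<in> carrier_mat (fst Q) (fst P)" and comm: "h * snd P i = snd Q i * h"
    using h i unfolding rep_hom_def by auto
  have kQ: "k * snd Q i \<in> carrier_mat (fst P) (fst Q)"
    using k CQ[OF i] by simp
  have "k * snd Q i = k * snd Q i * (h * k)"
    using kQ by (simp add: hk right_mult_one_mat)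
  also have "\<dots> = k * (snd Q i * h) * k"
    by (simp only: assoc_mult_mat[OF kQ hc k, symmetric] assoc_mult_mat[OF k CQ[OF i] hc])
  also have "\<dots> = k * h * snd P i * k"
    by (simp only: comm[symmetric] assoc_mult_mat[OF k hc CP[OF i], symmetric])
  also have "\<dots> = snd P i * k"
    using CP[OF i] by (simp add: kh)
  finally show "k * snd Q i = snd P i * k" .
qed

lemma projective_cover_unique:
  assumes P: "projective_cover isrep n P S" and Q: "projective_cover isrep n Q S"
    and carrier: "\<And>M i. isrep M \<Longrightarrow> i < n \<Longrightarrow> snd M i \<in> carrier_mat (fst M) (fst M)"
  shows "rep_iso n P Q"
proof -
  obtain \<pi>P where \<pi>P: "rep_hom n P S \<pi>P" "surj_mat \<pi>P" "superfluous_kernel n P S \<pi>P"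
    using P unfolding projective_cover_iff by blast
  obtain \<pi>Q where \<pi>Q: "rep_hom n Q S \<pi>Q" "surj_mat \<pi>Q" "superfluous_kernel n Q S \<pi>Q"
    using Q unfolding projective_cover_iff by blast
  have PP: "projective_rep isrep n P" and QQ: "projective_rep isrep n Q" and S: "isrep S"
    using P Q unfolding projective_cover_iff by auto
  then have CP: "\<And>i. i < n \<Longrightarrow> snd P i \<in> carrier_mat (fst P) (fst P)"
    and CQ: "\<And>i. i < n \<Longrightarrow> snd Q i \<in> carrier_mat (fst Q) (fst Q)"
    using carrier projective_repD(1) by blast+
  obtain h where h: "rep_hom n P Q h" "\<pi>Q * h = \<pi>P"
    using projective_repD(2)[OF PP projective_repD(1)[OF QQ] S \<pi>Q(1,2) \<pi>P(1)] by blast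
  obtain g where g: "rep_hom n Q P g" "\<pi>P * g = \<pi>Q"
    using projective_repD(2)[OF QQ projective_repD(1)[OF PP] S \<pi>P(1,2) \<pi>Q(1)] by blast
  have hc: "h \<in> carrier_mat (fst Q) (fst P)" and gc: "g \<in> carrier_mat (fst P) (fst Q)"
    using h g unfolding rep_hom_def by auto
  have "surj_mat h"
    using h(1) \<pi>P(1,2) \<pi>Q(1,3) h(2) CP CQ by (rule surj_mat_if_lifts_cover)
  moreover have "surj_mat g"
    using g(1) \<pi>Q(1,2) \<pi>P(1,3) g(2) CQ CP by (rule surj_mat_if_lifts_cover)
  ultimately obtain k where k: "k \<in> carrier_mat (fst P) (fst Q)" "k * h = 1\<^sub>m (fst P)" "h * k = 1\<^sub>m (fst Q)"
    using two_sided_inverse_if_surj_mats[OF hc gc] by blast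
  have "rep_hom n Q P k"
    by (rule rep_hom_inverse[OF h(1) k CP CQ])
  then show ?thesis
    unfolding rep_iso_def using h(1) k by blast
qed

lemma sign_rep_simps [simp]:
  "fst sign_rep = 1" "snd sign_rep i = mat 1 1 (\<lambda>_. - 1)"
  unfolding sign_rep_def by simp_all

lemma sign_mat_mult:
  fixes A :: "'a::ring_1 mat"
  assumes "A \<in> carrier_mat 1 k"
  shows "mat 1 1 (\<lambda>_. - 1) * A = - A"
  using assms by (intro eq_matI) (auto simp: scalar_prod_def)

lemma rep_hom_sign_iff:
  "rep_hom n M sign_rep \<pi> \<longleftrightarrow> \<pi> \<in> carrier_mat 1 (fst M) \<and> (\<forall>i<n. \<pi> * snd M i = - \<pi>)"
  unfolding rep_hom_def by (auto simp: sign_mat_mult simp del: One_nat_def)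

lemma hecke_D_rep_sign: "hecke_D_rep q n (sign_rep :: 'a::field rep)"
proof -
  have "mat 1 1 (\<lambda>_. - 1) + 1\<^sub>m 1 = (0\<^sub>m 1 1 :: 'a mat)"
    by (intro eq_matI) auto
  then show ?thesis
    unfolding hecke_D_rep_def Let_def by simp
qed

lemma rep_hom_sign_Res:
  assumes B: "hecke_B_rep q n (d, T)" and \<pi>: "rep_hom n (d, T) sign_rep \<pi>" and n: "2 \<le> n"
  shows "rep_hom n (Res (d, T)) sign_rep \<pi>"
proof -
  have \<pi>c: "\<pi> \<in> carrier_mat 1 d" and \<pi>T: "\<And>i. i < n \<Longrightarrow> \<pi> * T i = - \<pi>"
    using \<pi> unfolding rep_hom_sign_iff by auto
  have C0: "T 0 \<in> carrier_mat d d" and C1: "T 1 \<in> carrier_mat d d"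
    using hecke_B_repD(1)[OF B] n by auto
  have "\<pi> * (T 0 * T 1 * T 0) = \<pi> * T 0 * T 1 * T 0"
    using \<pi>c C0 C1 by (simp add: assoc_mult_mat[of _ 1 d _ d _ d])
  also have "\<dots> = - \<pi>"
    using \<pi>T[of 0] \<pi>T[of 1] n \<pi>c C0 C1 by simp
  finally show ?thesis
    using \<pi>c \<pi>T unfolding rep_hom_sign_iff Res_pair by auto
qed

lemma sign_functional:
  assumes \<pi>: "rep_hom n (d, T) sign_rep \<pi>" and i: "i < n" and Ti: "T i \<in> carrier_mat d d"
    and x: "x \<in> carrier_vec d"
  shows "row \<pi> 0 \<bullet> (T i *\<^sub>v x) = - (row \<pi> 0 \<bullet> x)"
proof -
  have \<pi>c: "\<pi> \<in> carrier_mat 1 d" and \<pi>T: "\<pi> * T i = - \<pi>"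
    using \<pi> i unfolding rep_hom_sign_iff by auto
  have "row \<pi> 0 \<bullet> (T i *\<^sub>v x) = ((\<pi> * T i) *\<^sub>v x) $ 0"
    using \<pi>c Ti x by simp
  also have "\<dots> = - (row \<pi> 0 \<bullet> x)"
    using \<pi>c x unfolding \<pi>T by simp
  finally show ?thesis .
qed

lemma mult_row_mat_vec_eq_0_iff:
  assumes "\<pi> \<in> carrier_mat 1 d" and "x \<in> carrier_vec d"
  shows "\<pi> *\<^sub>v x = 0\<^sub>v 1 \<longleftrightarrow> row \<pi> 0 \<bullet> x = 0"
proof
  assume "\<pi> *\<^sub>v x = 0\<^sub>v 1"
  moreover have "(\<pi> *\<^sub>v x) $ 0 = row \<pi> 0 \<bullet> x"
    using assms by simp
  ultimately show "row \<pi> 0 \<bullet> x = 0"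
    by simp
qed (use assms in \<open>auto intro!: eq_vecI\<close>)

lemma submodule_plus_kernel_eq_carrier:
  fixes \<pi> :: "'a::field mat"
  assumes \<pi>: "\<pi> \<in> carrier_mat 1 (fst M)" and U: "submodule n M U"
    and v: "v \<in> U" "row \<pi> 0 \<bullet> v \<noteq> 0"
  shows "{u + k | u k. u \<in> U \<and> k \<in> carrier_vec (fst M) \<and> \<pi> *\<^sub>v k = 0\<^sub>v 1} = carrier_vec (fst M)"
    (is "?sum = _")
proof (intro equalityI subsetI)
  let ?p = "\<lambda>x. row \<pi> 0 \<bullet> x"
  have Uc: "U \<subseteq> carrier_vec (fst M)"
    using U unfolding submodule_def by simp
  show "x \<in> carrier_vec (fst M)" if "x \<in> ?sum" for x
  proof -
    obtain u k where "x = u + k" "u \<in> U" "k \<in> carrier_vec (fst M)"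
      using \<open>x \<in> ?sum\<close> by blast
    then show ?thesis
      using Uc by auto
  qed
  fix x :: "'a vec" assume x: "x \<in> carrier_vec (fst M)"
  define c where "c = ?p x / ?p v"
  have vc: "v \<in> carrier_vec (fst M)"
    using v Uc by auto
  have row: "row \<pi> 0 \<in> carrier_vec (fst M)"
    by (rule row_carrier_vec[OF _ \<pi>]) simp
  have "c \<cdot>\<^sub>v v \<in> U"
    using U v unfolding submodule_def by blast
  moreover have "x = c \<cdot>\<^sub>v v + (x - c \<cdot>\<^sub>v v)"
    using x vc by (intro eq_vecI) auto
  moreover have kc: "x - c \<cdot>\<^sub>v v \<in> carrier_vec (fst M)"
    using x vc by simp
  moreover have "?p (x - c \<cdot>\<^sub>v v) = ?p x - c * ?p v"
    using row x vc by (simp add: scalar_prod_minus_distrib[OF row])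
  then have "\<pi> *\<^sub>v (x - c \<cdot>\<^sub>v v) = 0\<^sub>v 1"
    using v(2) mult_row_mat_vec_eq_0_iff[OF \<pi> kc] unfolding c_def by simp
  ultimately show "x \<in> ?sum"
    by blast
qed

lemma superfluous_kernel_sign_iff:
  fixes \<pi> :: "'a::field mat"
  assumes \<pi>: "\<pi> \<in> carrier_mat 1 (fst M)" and surj: "surj_mat \<pi>"
  shows "superfluous_kernel n M sign_rep \<pi> \<longleftrightarrow>
    (\<forall>U v. submodule n M U \<longrightarrow> v \<in> U \<longrightarrow> row \<pi> 0 \<bullet> v \<noteq> 0 \<longrightarrow> U = carrier_vec (fst M))"
    (is "_ \<longleftrightarrow> ?separating")
proof (intro iffI allI impI)
  fix U v
  assume kernel: "superfluous_kernel n M sign_rep \<pi>" and U: "submodule n M U"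
    and v: "v \<in> U" "row \<pi> 0 \<bullet> v \<noteq> 0"
  show "U = carrier_vec (fst M)"
    using kernel[unfolded superfluous_kernel_def sign_rep_simps, rule_format,
        OF conjI[OF U submodule_plus_kernel_eq_carrier[OF \<pi> U v]]] .
next
  assume separating: ?separating
  have "vec 1 (\<lambda>_. 1) \<in> carrier_vec (dim_row \<pi>)"
    using \<pi> by simp
  then have "\<exists>x0 \<in> carrier_vec (dim_col \<pi>). \<pi> *\<^sub>v x0 = vec 1 (\<lambda>_. 1)"
    using surj unfolding surj_mat_def by blast
  then obtain x0 where x0: "x0 \<in> carrier_vec (fst M)" "\<pi> *\<^sub>v x0 = vec 1 (\<lambda>_. 1)"
    using \<pi> by auto
  show "superfluous_kernel n M sign_rep \<pi>"
    unfolding superfluous_kernel_def sign_rep_simps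
  proof (intro allI impI, elim conjE)
    fix U
    assume U: "submodule n M U"
      and sum: "{u + k | u k. u \<in> U \<and> k \<in> carrier_vec (fst M) \<and> \<pi> *\<^sub>v k = 0\<^sub>v 1} = carrier_vec (fst M)"
    have "x0 \<in> {u + k | u k. u \<in> U \<and> k \<in> carrier_vec (fst M) \<and> \<pi> *\<^sub>v k = 0\<^sub>v 1}"
      unfolding sum by (rule x0(1))
    then obtain u k where uk: "u \<in> U" "k \<in> carrier_vec (fst M)" "\<pi> *\<^sub>v k = 0\<^sub>v 1" "x0 = u + k"
      by blast
    have "u \<in> carrier_vec (fst M)"
      using U uk(1) unfolding submodule_def by auto
    then have "\<pi> *\<^sub>v u = vec 1 (\<lambda>_. 1)"
      using x0(2) uk \<pi> by (simp add: mult_add_distrib_mat_vec)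
    moreover have "row \<pi> 0 \<bullet> u = (\<pi> *\<^sub>v u) $ 0"
      using \<pi> by simp
    ultimately have "row \<pi> 0 \<bullet> u \<noteq> 0"
      by simp
    then show "U = carrier_vec (fst M)"
      using separating U uk(1) by blast
  qed
qed

section \<open>Submodules of the restriction\<close>

lemma submodule_if_Res_submodule:
  assumes "submodule n (Res (d, T)) V" and "\<And>v. v \<in> V \<Longrightarrow> T 0 *\<^sub>v v \<in> V"
  shows "submodule n (d, T) V"
proof -
  have "T i *\<^sub>v v \<in> V" if "i < n" "v \<in> V" for i v
    using assms that unfolding submodule_def Res_pair by (cases "i = 0") auto
  then show ?thesis
    using assms(1) unfolding submodule_def Res_pair by simp
qed

lemma Res_T0_conj_vec:
  assumes B: "hecke_B_rep q n (d, T)" and n: "2 \<le> n" and i: "i < n" and x: "x \<in> carrier_vec d"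
  shows "T 0 *\<^sub>v (snd (Res (d, T)) i *\<^sub>v x)
    = snd (Res (d, T)) (Transposition.transpose 0 1 i) *\<^sub>v (T 0 *\<^sub>v x)"
proof -
  have "Transposition.transpose 0 1 i < n"
    using i n by (rule transpose_01_less)
  then have "T 0 \<in> carrier_mat d d" "snd (Res (d, T)) i \<in> carrier_mat d d"
    "snd (Res (d, T)) (Transposition.transpose 0 1 i) \<in> carrier_mat d d"
    using hecke_B_repD(1)[OF B] hecke_D_rep_carrier[OF hecke_D_rep_Res[OF B n]] i n by auto
  then show ?thesis
    using Res_T0_conj[OF B n i] x by (metis assoc_mult_mat_vec)
qed

lemma T0_involution_vec:
  assumes B: "hecke_B_rep q n (d, T)" and n: "0 < n" and x: "x \<in> carrier_vec d"
  shows "T 0 *\<^sub>v (T 0 *\<^sub>v x) = x"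
proof -
  have "T 0 *\<^sub>v (T 0 *\<^sub>v x) = (T 0 * T 0) *\<^sub>v x"
    using hecke_B_repD(1)[OF B, of 0] n x by simp
  then show ?thesis
    using hecke_B_rep_T0_involution[OF B n] x by simp
qed

lemma Res_sign_functional:
  fixes p :: "'a::field vec"
  assumes B: "hecke_B_rep q n (d, T)" and n: "2 \<le> n"
    and p_T: "\<And>i x. i < n \<Longrightarrow> x \<in> carrier_vec d \<Longrightarrow> p \<bullet> (T i *\<^sub>v x) = - (p \<bullet> x)"
    and i: "i < n" and x: "x \<in> carrier_vec d"
  shows "p \<bullet> (snd (Res (d, T)) i *\<^sub>v x) = - (p \<bullet> x)"
proof (cases "i = 0")
  case True
  have C0: "T 0 \<in> carrier_mat d d" and C1: "T 1 \<in> carrier_mat d d"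
    using hecke_B_repD(1)[OF B] n by auto
  have "(T 0 * T 1 * T 0) *\<^sub>v x = (T 0 * T 1) *\<^sub>v (T 0 *\<^sub>v x)"
    using C0 C1 x by (intro assoc_mult_mat_vec) auto
  also have "\<dots> = T 0 *\<^sub>v (T 1 *\<^sub>v (T 0 *\<^sub>v x))"
    using C0 C1 x by (intro assoc_mult_mat_vec) auto
  finally have "snd (Res (d, T)) i *\<^sub>v x = T 0 *\<^sub>v (T 1 *\<^sub>v (T 0 *\<^sub>v x))"
    using True by (simp add: Res_pair)
  then show ?thesis
    using p_T C0 C1 n x by simp
next
  case False
  then show ?thesis
    using p_T i x by (simp add: Res_pair)
qed

locale Res_submodule =
  fixes q :: "'a::field" and n d :: nat and T :: "nat \<Rightarrow> 'a mat" and U :: "'a vec set"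
    and p :: "'a vec"
  assumes B: "hecke_B_rep q n (d, T)" and n: "2 \<le> n" and U: "submodule n (Res (d, T)) U"
    and p: "p \<in> carrier_vec d"
    and p_T: "\<And>i x. i < n \<Longrightarrow> x \<in> carrier_vec d \<Longrightarrow> p \<bullet> (T i *\<^sub>v x) = - (p \<bullet> x)"
begin

abbreviation R :: "nat \<Rightarrow> 'a mat" where
  "R \<equiv> snd (Res (d, T))"

definition core :: "'a vec set" where
  "core = {w \<in> U. T 0 *\<^sub>v w \<in> U}"

definition twisted_sum :: "'a vec set" where
  "twisted_sum = {u + T 0 *\<^sub>v u' | u u'. u \<in> U \<and> u' \<in> U \<and> p \<bullet> u + p \<bullet> u' = 0}"

lemma subset_carrier: "U \<subseteq> carrier_vec d"
  and zero_mem: "0\<^sub>v d \<in> U"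
  and add_mem: "u \<in> U \<Longrightarrow> v \<in> U \<Longrightarrow> u + v \<in> U"
  and smult_mem: "u \<in> U \<Longrightarrow> c \<cdot>\<^sub>v u \<in> U"
  and gen_mem: "i < n \<Longrightarrow> u \<in> U \<Longrightarrow> R i *\<^sub>v u \<in> U"
  using U unfolding submodule_def by auto

lemma T0_carrier: "T 0 \<in> carrier_mat d d"
  using hecke_B_repD(1)[OF B] n by simp

lemma T0_zero: "T 0 *\<^sub>v 0\<^sub>v d = 0\<^sub>v d"
  using T0_carrier by (intro eq_vecI) auto

lemma p_add: "x \<in> carrier_vec d \<Longrightarrow> y \<in> carrier_vec d \<Longrightarrow> p \<bullet> (x + y) = p \<bullet> x + p \<bullet> y"
  using p by (rule scalar_prod_add_distrib)

lemma core_submodule: "submodule n (d, T) core"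
proof (rule submodule_if_Res_submodule)
  show "submodule n (Res (d, T)) core"
    unfolding submodule_def fst_Res fst_conv
  proof (intro conjI ballI allI impI)
    show "core \<subseteq> carrier_vec d"
      using subset_carrier unfolding core_def by auto
    show "0\<^sub>v d \<in> core"
      using zero_mem T0_zero unfolding core_def by simp
    fix u assume u: "u \<in> core"
    then have uc: "u \<in> carrier_vec d"
      using subset_carrier unfolding core_def by auto
    show "u + v \<in> core" if v: "v \<in> core" for v
    proof -
      have "T 0 *\<^sub>v (u + v) = T 0 *\<^sub>v u + T 0 *\<^sub>v v"
        using T0_carrier uc v subset_carrier unfolding core_def by (auto simp: mult_add_distrib_mat_vec)
      then show ?thesis
        using u v add_mem unfolding core_def by simp
    qed
    show "c \<cdot>\<^sub>v u \<in> core" for c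
    proof -
      have "T 0 *\<^sub>v (c \<cdot>\<^sub>v u) = c \<cdot>\<^sub>v (T 0 *\<^sub>v u)"
        using T0_carrier uc by (simp add: mult_mat_vec)
      then show ?thesis
        using u smult_mem unfolding core_def by simp
    qed
    show "R i *\<^sub>v u \<in> core" if i: "i < n" for i
      using u i gen_mem transpose_01_less[OF i n] Res_T0_conj_vec[OF B n i uc]
      unfolding core_def by simp
  qed
  show "T 0 *\<^sub>v w \<in> core" if "w \<in> core" for w
    using that subset_carrier T0_involution_vec[OF B] n unfolding core_def by auto
qed

lemma twisted_sumI:
  "u \<in> U \<Longrightarrow> u' \<in> U \<Longrightarrow> p \<bullet> u + p \<bullet> u' = 0 \<Longrightarrow> u + T 0 *\<^sub>v u' \<in> twisted_sum"
  unfolding twisted_sum_def by blast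

lemma twisted_sumE:
  assumes "x \<in> twisted_sum"
  obtains u u' where "u \<in> U" "u' \<in> U" "u \<in> carrier_vec d" "u' \<in> carrier_vec d"
    "p \<bullet> u + p \<bullet> u' = 0" "x = u + T 0 *\<^sub>v u'"
  using assms subset_carrier unfolding twisted_sum_def by blast

lemma twisted_sum_carrier: "x \<in> twisted_sum \<Longrightarrow> x \<in> carrier_vec d"
  using T0_carrier by (elim twisted_sumE) simp

lemma twisted_sum_add: "x \<in> twisted_sum \<Longrightarrow> y \<in> twisted_sum \<Longrightarrow> x + y \<in> twisted_sum"
proof (elim twisted_sumE)
  fix u u' v v'
  assume uu: "u \<in> U" "u' \<in> U" "u \<in> carrier_vec d" "u' \<in> carrier_vec d" "p \<bullet> u + p \<bullet> u' = 0"
    and x: "x = u + T 0 *\<^sub>v u'"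
    and vv: "v \<in> U" "v' \<in> U" "v \<in> carrier_vec d" "v' \<in> carrier_vec d" "p \<bullet> v + p \<bullet> v' = 0"
    and y: "y = v + T 0 *\<^sub>v v'"
  have "x + y = (u + v) + T 0 *\<^sub>v (u' + v')"
    unfolding x y using uu vv T0_carrier by (intro eq_vecI) (auto simp: mult_add_distrib_mat_vec)
  moreover have "p \<bullet> (u + v) + p \<bullet> (u' + v') = 0"
    using uu vv by (simp add: p_add algebra_simps)
  ultimately show "x + y \<in> twisted_sum"
    using uu vv add_mem by (simp add: twisted_sumI)
qed

lemma twisted_sum_smult: "x \<in> twisted_sum \<Longrightarrow> c \<cdot>\<^sub>v x \<in> twisted_sum"
proof (elim twisted_sumE)
  fix u u'
  assume uu: "u \<in> U" "u' \<in> U" "u \<in> carrier_vec d" "u' \<in> carrier_vec d" "p \<bullet> u + p \<bullet> u' = 0"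
    and x: "x = u + T 0 *\<^sub>v u'"
  have "c \<cdot>\<^sub>v x = c \<cdot>\<^sub>v u + T 0 *\<^sub>v (c \<cdot>\<^sub>v u')"
    unfolding x using uu T0_carrier by (intro eq_vecI) (auto simp: mult_mat_vec distrib_left)
  moreover have "p \<bullet> (c \<cdot>\<^sub>v u) + p \<bullet> (c \<cdot>\<^sub>v u') = 0"
    using uu p by (simp add: distrib_left[symmetric])
  ultimately show "c \<cdot>\<^sub>v x \<in> twisted_sum"
    using uu smult_mem by (simp add: twisted_sumI)
qed

lemma twisted_sum_gen:
  assumes i: "i < n"
  shows "x \<in> twisted_sum \<Longrightarrow> R i *\<^sub>v x \<in> twisted_sum"
proof (elim twisted_sumE)
  fix u u'
  assume uu: "u \<in> U" "u' \<in> U" "u \<in> carrier_vec d" "u' \<in> carrier_vec d" "p \<bullet> u + p \<bullet> u' = 0"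
    and x: "x = u + T 0 *\<^sub>v u'"
  let ?j = "Transposition.transpose 0 1 i"
  have j: "?j < n"
    using i n by (rule transpose_01_less)
  have "R i \<in> carrier_mat d d"
    using hecke_D_rep_carrier[OF hecke_D_rep_Res[OF B n] i] by simp
  then have "R i *\<^sub>v x = R i *\<^sub>v u + T 0 *\<^sub>v (R ?j *\<^sub>v u')"
    unfolding x using uu T0_carrier Res_T0_conj_vec[OF B n j uu(4)] by (simp add: mult_add_distrib_mat_vec)
  moreover have "p \<bullet> (R i *\<^sub>v u) + p \<bullet> (R ?j *\<^sub>v u') = 0"
    using Res_sign_functional[OF B n p_T i uu(3)] Res_sign_functional[OF B n p_T j uu(4)] uu(5)
    by (simp add: add_eq_0_iff)
  ultimately show "R i *\<^sub>v x \<in> twisted_sum"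
    using gen_mem[OF i uu(1)] gen_mem[OF j uu(2)] by (simp add: twisted_sumI)
qed

lemma twisted_sum_T0: "x \<in> twisted_sum \<Longrightarrow> T 0 *\<^sub>v x \<in> twisted_sum"
proof (elim twisted_sumE)
  fix u u'
  assume uu: "u \<in> U" "u' \<in> U" "u \<in> carrier_vec d" "u' \<in> carrier_vec d" "p \<bullet> u + p \<bullet> u' = 0"
    and x: "x = u + T 0 *\<^sub>v u'"
  have "T 0 *\<^sub>v x = u' + T 0 *\<^sub>v u"
    unfolding x using uu T0_carrier T0_involution_vec[OF B _ uu(4)] n
    by (auto simp: mult_add_distrib_mat_vec add.commute)
  then show "T 0 *\<^sub>v x \<in> twisted_sum"
    using uu by (simp add: twisted_sumI add.commute)
qed

lemma twisted_sum_submodule: "submodule n (d, T) twisted_sum"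
proof (rule submodule_if_Res_submodule)
  have "0\<^sub>v d + T 0 *\<^sub>v 0\<^sub>v d \<in> twisted_sum"
    using zero_mem p by (intro twisted_sumI) auto
  then have "0\<^sub>v d \<in> twisted_sum"
    using T0_zero by simp
  then show "submodule n (Res (d, T)) twisted_sum"
    unfolding submodule_def fst_Res fst_conv
    using twisted_sum_carrier twisted_sum_add twisted_sum_smult twisted_sum_gen by blast
qed (rule twisted_sum_T0)

lemma eq_carrier:
  assumes two: "(2::'a) \<noteq> 0"
    and separating: "\<And>V v. submodule n (d, T) V \<Longrightarrow> v \<in> V \<Longrightarrow> p \<bullet> v \<noteq> 0 \<Longrightarrow> V = carrier_vec d"
    and u0: "u0 \<in> U" "p \<bullet> u0 \<noteq> 0"
  shows "U = carrier_vec d"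
proof -
  have p_T0: "p \<bullet> (T 0 *\<^sub>v x) = - (p \<bullet> x)" if "x \<in> carrier_vec d" for x
    using p_T n that by simp
  have u0c: "u0 \<in> carrier_vec d"
    using u0 subset_carrier by auto
  show ?thesis
  proof (cases "\<exists>w \<in> core. p \<bullet> w \<noteq> 0")
    case True
    then have "core = carrier_vec d"
      using separating[OF core_submodule] by blast
    then show ?thesis
      using subset_carrier unfolding core_def by auto
  next
    case False
    have "u0 + T 0 *\<^sub>v ((- 1) \<cdot>\<^sub>v u0) \<in> twisted_sum"
      using u0(1) smult_mem p u0c by (intro twisted_sumI) auto
    moreover have "p \<bullet> (u0 + T 0 *\<^sub>v ((- 1) \<cdot>\<^sub>v u0)) = 2 * (p \<bullet> u0)"
      using u0c T0_carrier p p_add p_T0 by simp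
    ultimately have "twisted_sum = carrier_vec d"
      using separating[OF twisted_sum_submodule] two u0(2) by simp
    then obtain u u' where uu: "u \<in> U" "u' \<in> U" "u \<in> carrier_vec d" "u' \<in> carrier_vec d"
      "p \<bullet> u + p \<bullet> u' = 0" "u0 = u + T 0 *\<^sub>v u'"
      using u0c by (blast elim: twisted_sumE)
    have "T 0 *\<^sub>v u' = u0 + (- 1) \<cdot>\<^sub>v u"
      using uu(3,4,6) T0_carrier by (intro eq_vecI) auto
    then have "u' \<in> core"
      using uu(1,2) u0(1) add_mem smult_mem unfolding core_def by simp
    then have "p \<bullet> u' = 0"
      using False by blast
    then have "p \<bullet> u0 = 0"
      using uu(3-6) T0_carrier p_add p_T0 by simp
    with u0(2) show ?thesis
      by contradiction
  qed
qed

end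

lemma projective_cover_Res:
  fixes T :: "nat \<Rightarrow> 'a::field mat"
  assumes cover: "projective_cover (hecke_B_rep q n) n (d, T) sign_rep"
    and n: "2 \<le> n" and two: "(2::'a) \<noteq> 0"
  shows "projective_cover (hecke_D_rep q n) n (Res (d, T)) sign_rep"
proof -
  obtain \<pi> where \<pi>: "rep_hom n (d, T) sign_rep \<pi>" and surj: "surj_mat \<pi>"
    and kernel: "superfluous_kernel n (d, T) sign_rep \<pi>"
    and P: "projective_rep (hecke_B_rep q n) n (d, T)"
    using cover unfolding projective_cover_iff by blast
  have B: "hecke_B_rep q n (d, T)"
    using P by (rule projective_repD)
  have \<pi>c: "\<pi> \<in> carrier_mat 1 d"
    using \<pi> unfolding rep_hom_sign_iff by simp
  have row: "row \<pi> 0 \<in> carrier_vec d"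
    by (rule row_carrier_vec[OF _ \<pi>c]) simp
  have "\<forall>U v. submodule n (Res (d, T)) U \<longrightarrow> v \<in> U \<longrightarrow> row \<pi> 0 \<bullet> v \<noteq> 0 \<longrightarrow> U = carrier_vec d"
  proof (intro allI impI)
    fix U v assume "submodule n (Res (d, T)) U" "v \<in> U" "row \<pi> 0 \<bullet> v \<noteq> 0"
    moreover have "\<And>V v. submodule n (d, T) V \<Longrightarrow> v \<in> V \<Longrightarrow> row \<pi> 0 \<bullet> v \<noteq> 0 \<Longrightarrow> V = carrier_vec d"
      using kernel superfluous_kernel_sign_iff[of \<pi> "(d, T)"] \<pi>c surj by simp
    moreover have "row \<pi> 0 \<bullet> (T i *\<^sub>v x) = - (row \<pi> 0 \<bullet> x)" if "i < n" "x \<in> carrier_vec d" for i x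
      using \<pi> that(1) hecke_B_repD(1)[OF B that(1)] that(2) by (rule sign_functional)
    ultimately show "U = carrier_vec d"
      using Res_submodule.eq_carrier[OF Res_submodule.intro[OF B n _ row]] two by blast
  qed
  then have "superfluous_kernel n (Res (d, T)) sign_rep \<pi>"
    using superfluous_kernel_sign_iff[of \<pi> "Res (d, T)"] \<pi>c surj by simp
  then show ?thesis
    unfolding projective_cover_iff
    using projective_rep_Res[OF P n] hecke_D_rep_sign rep_hom_sign_Res[OF B \<pi> n] surj by blast
qed

lemma two_neq_zero_if_even_primitive_root:
  fixes q :: "'a::field"
  assumes q: "primitive_root_of_unity q e" and "even e" and "e \<ge> 2"
  shows "(2::'a) \<noteq> 0"
proof
  assume two: "(2::'a) = 0"
  obtain m where m: "e = 2 * m" "0 < m" "m < e"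
    using \<open>even e\<close> \<open>e \<ge> 2\<close> by fastforce
  have "(q ^ m - 1) * (q ^ m - 1) = q ^ e - 1 - 2 * (q ^ m - 1)"
    unfolding m(1) by (simp add: algebra_simps power_mult_distrib flip: power_add mult_2)
  also have "\<dots> = 0"
    using q two unfolding primitive_root_of_unity_def by simp
  finally have "q ^ m = 1"
    by simp
  with q m show False
    unfolding primitive_root_of_unity_def by blast
qed

theorem lemma3p6:
  fixes q :: "'a::field" and e :: nat and P PB :: "'a rep"
  assumes "primitive_root_of_unity q e" and "even e" and "e \<ge> 2"
    and "projective_cover (hecke_D_rep q e) e P sign_rep"
    and "projective_cover (hecke_B_rep q e) e PB sign_rep"
  shows "rep_iso e P (Res PB)"
proof -
  have two: "(2::'a) \<noteq> 0"
    using assms(1-3) by (rule two_neq_zero_if_even_primitive_root)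
  obtain d T where PB: "PB = (d, T)"
    by fastforce
  have "projective_cover (hecke_D_rep q e) e (Res PB) sign_rep"
    using assms(5) assms(3) two unfolding PB by (rule projective_cover_Res)
  with assms(4) show ?thesis
    using hecke_D_rep_carrier by (rule projective_cover_unique)
qed

end
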